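(* Let $T'$ be a standard tableau of degree $n\ge4$ and let $u$ be the subword of its reading word formed by the letters $1,2,3,4$. Let $\Sigma_{n-4}$ denote the sum of all standard tableaux of degree $n-4$. Then $T'$ appears as a term of (a) $\mathbb B_2^{(0)}\mathbb B_2^{(0)}\Sigma_{n-4}$ iff $u\in\{1234,4123,3412\}$; (b) $\mathbb B_2^{(0)}\mathbb B_2^{(1)}\Sigma_{n-4}$ iff $u\in\{4312,3124\}$; (c) $\mathbb B_2^{(1)}\mathbb B_2^{(0)}\Sigma_{n-4}$ iff $u\in\{4213,2134\}$; (d) $\mathbb B_2^{(1)}\mathbb B_2^{(1)}\Sigma_{n-4}$ iff $u\in\{4321,3214,2413\}$.
   Context: Tableaux (French convention: rows of lengths $\lambda_1\ge\lambda_2\ge\cdots$ from bottom to top). A tableau is identified with (shape, reading word), the reading word listing the entries row by row from top row to bottom row, each row left to right; word operators act on tableaux via reading words, keeping the shape. Standard tableau of degree $n$: rows increase left to right, columns increase upwards, entries $1,\dots,n$ each once (degree $0$: the empty tableau). $T^t$ is the transpose (reflection of diagram and entries across the main diagonal). Word operators (compositions act right to left): $\tau_1$ adds $1$ to every letter; $r_{(11\to01)}$, on a word with exactly two letters $1$, replaces the first by $0$; for a word with $(\mathrm{ev}_a,\mathrm{ev}_{a+1})\in\{(1,2),(2,1)\}$ ($\mathrm{ev}_i$ = number of occurrences of $i$), $\sigma_a$ replaces the subword of letters in $\{a,b\}$, $b=a+1$, in place, via $aab\leftrightarrow abb$, $aba\leftrightarrow bba$, $baa\leftrightarrow bab$.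 For a tableau $T$ of degree $n$, $A_{n+1,n+1}T$ is the sum of all tableaux obtained by adding two cells containing $n+1$ so that the new shape is a partition diagram and the two new cells lie in different columns. Operators and transposition extend linearly to $\mathbb Z$-linear combinations of tableaux. For standard $T$ of degree $n$: $\mathbb B_2^{(0)}T=\tau_1r_{(11\to01)}\sigma_1\sigma_2\cdots\sigma_nA_{n+1,n+1}T$ and $\mathbb B_2^{(1)}T=(\mathbb B_2^{(0)}T^t)^t$. *)

theory Defs
  imports Main
begin

(* A tableau is a pair (shape, reading word).  The shape lists row lengths
   bottom to top (French convention); the reading word lists the rows from the
   top row down to the bottom row, each row left to right. *)
type_synonym tab = "nat list \<times> nat list"

(* Z-linear combinations of tableaux: coefficient functions *)
type_synonym comb = "tab \<Rightarrow> int"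

definition is_partition :: "nat list \<Rightarrow> bool" where
  "is_partition la \<longleftrightarrow> sorted_wrt (\<lambda>x y. x \<ge> y) la \<and> (\<forall>x\<in>set la. 0 < x)"

(* rows of a tableau, bottom row first *)
fun rows :: "nat list \<Rightarrow> nat list \<Rightarrow> nat list list" where
  "rows [] w = []"
| "rows (l # ls) w = drop (sum_list ls) w # rows ls (take (sum_list ls) w)"

definition word_of_rows :: "nat list list \<Rightarrow> nat list" where
  "word_of_rows rs = concat (rev rs)"

(* entry in row i (from the bottom), column j (from the left), 0-indexed *)
definition entry :: "tab \<Rightarrow> nat \<Rightarrow> nat \<Rightarrow> nat" where
  "entry t i j = rows (fst t) (snd t) ! i ! j"

definition cells :: "nat list \<Rightarrow> (nat \<times> nat) set" where
  "cells la = {(i, j). i < length la \<and> j < la ! i}"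

definition standard :: "nat \<Rightarrow> tab \<Rightarrow> bool" where
  "standard n t \<longleftrightarrow>
     (let la = fst t; w = snd t; rs = rows la w in
       is_partition la \<and> sum_list la = n \<and> length w = n \<and>
       distinct w \<and> set w = {1..n} \<and>
       (\<forall>i < length la. sorted_wrt (<) (rs ! i)) \<and>
       (\<forall>i j. Suc i < length la \<and> j < la ! Suc i \<longrightarrow> rs ! i ! j < rs ! Suc i ! j))"

definition conj_part :: "nat list \<Rightarrow> nat list" where
  "conj_part la = map (\<lambda>j. length (filter (\<lambda>l. j < l) la)) [0..<foldr max la 0]"

definition transpose_tab :: "tab \<Rightarrow> tab" where
  "transpose_tab t =
     (let mu = conj_part (fst t) in
       (mu, word_of_rows (map (\<lambda>i. map (\<lambda>j. entry t j i) [0..<mu ! i]) [0..<length mu])))"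

definition tau1 :: "nat list \<Rightarrow> nat list" where
  "tau1 w = map Suc w"

fun zero_first_one :: "nat list \<Rightarrow> nat list" where
  "zero_first_one [] = []"
| "zero_first_one (x # xs) = (if x = 1 then 0 # xs else x # zero_first_one xs)"

(* r_(11->01); identity outside its domain (never used there) *)
definition r1101 :: "nat list \<Rightarrow> nat list" where
  "r1101 w = (if count_list w 1 = 2 then zero_first_one w else w)"

definition sw3 :: "nat \<Rightarrow> nat \<Rightarrow> nat list \<Rightarrow> nat list" where
  "sw3 a b xs =
     (if xs = [a,a,b] then [a,b,b] else if xs = [a,b,b] then [a,a,b]
      else if xs = [a,b,a] then [b,b,a] else if xs = [b,b,a] then [a,b,a]
      else if xs = [b,a,a] then [b,a,b] else if xs = [b,a,b] then [b,a,a]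
      else xs)"

fun fill_sub :: "(nat \<Rightarrow> bool) \<Rightarrow> nat list \<Rightarrow> nat list \<Rightarrow> nat list" where
  "fill_sub P ys [] = []"
| "fill_sub P ys (x # xs) =
     (if P x then (case ys of [] \<Rightarrow> x # fill_sub P [] xs | y # ys' \<Rightarrow> y # fill_sub P ys' xs)
      else x # fill_sub P ys xs)"

(* sigma_a; identity outside its domain (never used there) *)
definition sigma :: "nat \<Rightarrow> nat list \<Rightarrow> nat list" where
  "sigma a w =
     (let b = Suc a; P = (\<lambda>x. x = a \<or> x = b) in
      if (count_list w a, count_list w b) \<in> {(1,2), (2,1)}
      then fill_sub P (sw3 a b (filter P w)) w else w)"

(* sigma_1 sigma_2 ... sigma_n (sigma_n applied first) *)
definition sigma_chain :: "nat \<Rightarrow> nat list \<Rightarrow> nat list" where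
  "sigma_chain n w = foldr sigma [1..<Suc n] w"

(* A_{n+1,n+1}: the set of tableaux obtained by adding two cells filled with n+1
   (new shape a partition, new cells in different columns); the operator is the
   sum of these tableaux *)
definition A_set :: "tab \<Rightarrow> tab set" where
  "A_set t =
     (let la = fst t; w = snd t; n = length w;
          oldrow = (\<lambda>i. if i < length la then rows la w ! i else []) in
      {(mu, word_of_rows (map (\<lambda>i. oldrow i @ replicate (mu ! i - length (oldrow i)) (Suc n))
                              [0..<length mu])) | mu.
         is_partition mu \<and> cells la \<subseteq> cells mu \<and> card (cells mu - cells la) = 2 \<and>
         (\<forall>c \<in> cells mu - cells la. \<forall>d \<in> cells mu - cells la. c \<noteq> d \<longrightarrow> snd c \<noteq> snd d)})"

definition delta :: "tab \<Rightarrow> comb" where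
  "delta s = (\<lambda>t. of_bool (s = t))"

definition lin :: "(tab \<Rightarrow> comb) \<Rightarrow> comb \<Rightarrow> comb" where
  "lin F c = (\<lambda>t'. \<Sum>t \<in> {t. c t \<noteq> 0}. c t * F t t')"

(* B_2^(0) T = tau_1 r_(11->01) sigma_1 ... sigma_n A_{n+1,n+1} T, n = degree of T *)
definition B0 :: "tab \<Rightarrow> comb" where
  "B0 t = (\<lambda>t'. \<Sum>s \<in> A_set t.
      of_bool ((fst s, tau1 (r1101 (sigma_chain (length (snd t)) (snd s)))) = t'))"

(* B_2^(1) T = (B_2^(0) T^t)^t, transpose extended linearly *)
definition B1 :: "tab \<Rightarrow> comb" where
  "B1 t = lin (\<lambda>s. delta (transpose_tab s)) (B0 (transpose_tab t))"

definition Sigma_std :: "nat \<Rightarrow> comb" where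
  "Sigma_std m = (\<lambda>t. of_bool (standard m t))"

end

theory Submission
  imports Defs
begin

definition read_pos :: "nat list \<Rightarrow> nat \<Rightarrow> nat \<Rightarrow> nat" where
  "read_pos la i j = sum_list (drop (Suc i) la) + j"

lemma length_rows [simp]: "length (rows la w) = length la"
  by (induction la arbitrary: w) auto

lemma sum_list_take_drop_nat: "sum_list (xs :: nat list) = sum_list (take k xs) + sum_list (drop k xs)"
  by (metis append_take_drop_id sum_list_append)

lemma rows_nth:
  assumes "length w = sum_list la" "i < length la"
  shows "rows la w ! i = take (la ! i) (drop (sum_list (drop (Suc i) la)) w)"
  using assms
proof (induction la arbitrary: w i)
  case Nil
  then show ?case by simp
next
  case (Cons l ls)
  show ?case
  proof (cases i)
    case 0
    with Cons.prems show ?thesis by simp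
  next
    case (Suc k)
    have k: "k < length ls" using Cons.prems Suc by simp
    have "sum_list (drop (Suc k) ls) + ls ! k \<le> sum_list ls"
      using sum_list_take_drop_nat[of ls "Suc k"] k by (simp add: take_Suc_conv_app_nth)
    then show ?thesis
      using Cons.IH[of "take (sum_list ls) w" k] Cons.prems k Suc
      by (simp add: take_drop min_def add.commute)
  qed
qed

lemma length_rows_nth:
  assumes "length w = sum_list la" "i < length la"
  shows "length (rows la w ! i) = la ! i"
proof -
  have "la ! i + sum_list (drop (Suc i) la) \<le> sum_list la"
    using sum_list_take_drop_nat[of la "Suc i"] assms(2) by (simp add: take_Suc_conv_app_nth)
  then show ?thesis using rows_nth[OF assms] assms by simp
qed

lemma rows_nth_nth:
  assumes "length w = sum_list la" "i < length la" "j < la ! i"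
  shows "rows la w ! i ! j = w ! read_pos la i j"
  using rows_nth[OF assms(1,2)] assms length_rows_nth[OF assms(1,2)]
  by (simp add: read_pos_def add.commute)

lemma entry_read_pos:
  assumes "length (snd t) = sum_list (fst t)" "i < length (fst t)" "j < fst t ! i"
  shows "entry t i j = snd t ! read_pos (fst t) i j"
  using rows_nth_nth[OF assms] by (simp add: entry_def)

lemma word_of_rows_Nil [simp]: "word_of_rows [] = []"
  by (simp add: word_of_rows_def)

lemma word_of_rows_Cons: "word_of_rows (r # rs) = word_of_rows rs @ r"
  by (simp add: word_of_rows_def)

lemma word_of_rows_append: "word_of_rows (xs @ ys) = word_of_rows ys @ word_of_rows xs"
  by (simp add: word_of_rows_def)

lemma length_word_of_rows: "length (word_of_rows rs) = sum_list (map length rs)"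
  by (simp add: word_of_rows_def length_concat rev_map[symmetric] sum_list_rev)

lemma filter_word_of_rows: "filter P (word_of_rows rs) = word_of_rows (map (filter P) rs)"
  by (simp add: word_of_rows_def filter_concat rev_map)

lemma word_of_rows_rows: "length w = sum_list la \<Longrightarrow> word_of_rows (rows la w) = w"
  by (induction la arbitrary: w) (auto simp: word_of_rows_Cons)

lemma rows_word_of_rows:
  "map length rs = mu \<Longrightarrow> rows mu (word_of_rows rs) = rs"
  by (induction rs arbitrary: mu) (auto simp: word_of_rows_Cons length_word_of_rows)

lemma sum_list_drop_ge:
  fixes la :: "nat list"
  assumes "k \<le> i" "i < length la"
  shows "la ! i + sum_list (drop (Suc i) la) \<le> sum_list (drop k la)"
proof -
  have "drop k la = take (i - k) (drop k la) @ la ! i # drop (Suc i) la"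
    using assms by (metis Cons_nth_drop_Suc append_take_drop_id drop_drop le_add_diff_inverse2)
  then show ?thesis by (metis le_add2 add.assoc add.commute sum_list.Cons sum_list_append)
qed

lemma read_pos_less_sum:
  "i < length la \<Longrightarrow> j < la ! i \<Longrightarrow> read_pos la i j < sum_list la"
  using sum_list_drop_ge[of 0 i la] by (simp add: read_pos_def)

text \<open>The reading word lists the rows from the top one down, so a cell comes earlier when it
  lies in a higher row.\<close>

lemma read_pos_less_iff:
  assumes "i < length la" "j < la ! i" "i' < length la" "j' < la ! i'"
  shows "read_pos la i j < read_pos la i' j' \<longleftrightarrow> i' < i \<or> (i = i' \<and> j < j')"
proof -
  have lower: "read_pos la b d < read_pos la a c" if "a < b" "b < length la" "d < la ! b" for a b c d
    using sum_list_drop_ge[of "Suc a" b la] that by (simp add: read_pos_def)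
  show ?thesis
    using lower[of i' i j j'] lower[of i i' j' j] assms
    by (cases i i' rule: linorder_cases) (auto simp: read_pos_def)
qed

lemma read_pos_inj:
  assumes "i < length la" "j < la ! i" "i' < length la" "j' < la ! i'"
    and "read_pos la i j = read_pos la i' j'"
  shows "i = i' \<and> j = j'"
  using read_pos_less_iff[OF assms(1-4)] read_pos_less_iff[OF assms(3,4,1,2)] assms(5)
  by (metis less_irrefl nat_neq_iff)

lemma read_pos_surj:
  "q < sum_list la \<Longrightarrow> \<exists>i j. i < length la \<and> j < la ! i \<and> q = read_pos la i j"
proof (induction la)
  case Nil
  then show ?case by simp
next
  case (Cons l ls)
  show ?case
  proof (cases "q < sum_list ls")
    case True
    then obtain i j where "i < length ls" "j < ls ! i" "q = read_pos ls i j" using Cons.IH by blast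
    then show ?thesis by (intro exI[of _ "Suc i"] exI[of _ j]) (simp add: read_pos_def)
  next
    case False
    then show ?thesis using Cons.prems
      by (intro exI[of _ 0] exI[of _ "q - sum_list ls"]) (auto simp: read_pos_def)
  qed
qed

lemma bij_betw_read_pos_cells:
  "bij_betw (\<lambda>(i, j). read_pos la i j) (cells la) {..<sum_list la}"
proof (rule bij_betwI')
  fix x y assume "x \<in> cells la" "y \<in> cells la"
  then show "((\<lambda>(i, j). read_pos la i j) x = (\<lambda>(i, j). read_pos la i j) y) = (x = y)"
    using read_pos_inj by (auto simp: cells_def)
next
  fix x assume "x \<in> cells la"
  then show "(\<lambda>(i, j). read_pos la i j) x \<in> {..<sum_list la}"
    using read_pos_less_sum by (auto simp: cells_def)
next
  fix q assume "q \<in> {..<sum_list la}"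
  then show "\<exists>x\<in>cells la. q = (\<lambda>(i, j). read_pos la i j) x"
    using read_pos_surj[of q la] by (auto simp: cells_def)
qed

lemma card_cells: "card (cells la) = sum_list la"
  using bij_betw_same_card[OF bij_betw_read_pos_cells] by simp

lemma finite_cells: "finite (cells la)"
  using bij_betw_finite[OF bij_betw_read_pos_cells] by simp

lemma card_cells_filter:
  assumes "length z = sum_list la"
  shows "card {c \<in> cells la. P (z ! read_pos la (fst c) (snd c))} = length (filter P z)"
proof -
  let ?f = "\<lambda>(i, j). read_pos la i j"
  let ?A = "{c \<in> cells la. P (z ! read_pos la (fst c) (snd c))}"
  have inj: "inj_on ?f ?A"
    using bij_betw_imp_inj_on[OF bij_betw_read_pos_cells[of la]] by (rule inj_on_subset) auto
  have "?f ` ?A = {q. q < length z \<and> P (z ! q)}"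
  proof
    show "?f ` ?A \<subseteq> {q. q < length z \<and> P (z ! q)}"
      using read_pos_less_sum assms by (auto simp: cells_def)
    show "{q. q < length z \<and> P (z ! q)} \<subseteq> ?f ` ?A"
    proof
      fix q assume "q \<in> {q. q < length z \<and> P (z ! q)}"
      then obtain i j where "i < length la" "j < la ! i" "q = read_pos la i j" "P (z ! q)"
        using read_pos_surj[of q la] assms by auto
      then show "q \<in> ?f ` ?A" by (auto simp: cells_def image_iff intro!: bexI[of _ "(i, j)"])
    qed
  qed
  then have "card ?A = card {q. q < length z \<and> P (z ! q)}" using card_image[OF inj] by simp
  then show ?thesis by (simp add: length_filter_conv_card)
qed

lemma is_partition_Cons:
  "is_partition (l # ls) \<longleftrightarrow> is_partition ls \<and> 0 < l \<and> (\<forall>x\<in>set ls. x \<le> l)"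
  unfolding is_partition_def by auto

lemma is_partition_antimono:
  "is_partition la \<Longrightarrow> i \<le> i' \<Longrightarrow> i' < length la \<Longrightarrow> la ! i' \<le> la ! i"
  unfolding is_partition_def by (metis antisym_conv1 dual_order.refl sorted_wrt_nth_less)

lemma is_partition_pos: "is_partition la \<Longrightarrow> i < length la \<Longrightarrow> 0 < la ! i"
  unfolding is_partition_def by auto

definition semistandard :: "nat list \<Rightarrow> nat list \<Rightarrow> bool" where
  "semistandard la w \<longleftrightarrow> is_partition la \<and> length w = sum_list la \<and>
     (\<forall>i j j'. i < length la \<and> j < j' \<and> j' < la ! i \<longrightarrow> w ! read_pos la i j \<le> w ! read_pos la i j') \<and>
     (\<forall>i i' j. i < i' \<and> i' < length la \<and> j < la ! i' \<longrightarrow> w ! read_pos la i j < w ! read_pos la i' j)"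

lemma semistandardI:
  assumes "is_partition la" "length w = sum_list la"
    and "\<And>i j j'. i < length la \<Longrightarrow> j < j' \<Longrightarrow> j' < la ! i \<Longrightarrow>
           w ! read_pos la i j \<le> w ! read_pos la i j'"
    and "\<And>i i' j. i < i' \<Longrightarrow> i' < length la \<Longrightarrow> j < la ! i' \<Longrightarrow>
           w ! read_pos la i j < w ! read_pos la i' j"
  shows "semistandard la w"
  using assms unfolding semistandard_def by blast

lemma semistandardD:
  assumes "semistandard la w"
  shows "is_partition la" "length w = sum_list la"
    and "\<And>i j j'. i < length la \<Longrightarrow> j < j' \<Longrightarrow> j' < la ! i \<Longrightarrow>
           w ! read_pos la i j \<le> w ! read_pos la i j'"
    and "\<And>i i' j. i < i' \<Longrightarrow> i' < length la \<Longrightarrow> j < la ! i' \<Longrightarrow>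
           w ! read_pos la i j < w ! read_pos la i' j"
  using assms unfolding semistandard_def by blast+

lemma column_strict_trans:
  fixes f :: "nat \<Rightarrow> nat \<Rightarrow> nat"
  assumes adj: "\<And>i j. Suc i < length la \<Longrightarrow> j < la ! Suc i \<Longrightarrow> f i j < f (Suc i) j"
    and part: "is_partition la"
  shows "i < i' \<Longrightarrow> i' < length la \<Longrightarrow> j < la ! i' \<Longrightarrow> f i j < f i' j"
proof (induction i' arbitrary: i)
  case 0
  then show ?case by simp
next
  case (Suc k)
  have "j < la ! k" using is_partition_antimono[OF part, of k "Suc k"] Suc.prems by simp
  moreover have "f k j < f (Suc k) j" using adj[of k j] Suc.prems by simp
  ultimately show ?case using Suc.IH[of i] Suc.prems by (cases "i = k") auto
qed

lemma standard_iff_semistandard: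
  "standard n (la, w) \<longleftrightarrow>
     sum_list la = n \<and> distinct w \<and> set w = {1..n} \<and> semistandard la w"
proof
  assume st: "standard n (la, w)"
  let ?rs = "rows la w"
  have basic: "is_partition la" "sum_list la = n" "length w = n" "distinct w" "set w = {1..n}"
    and R: "\<forall>i < length la. sorted_wrt (<) (?rs ! i)"
    and C: "\<forall>i j. Suc i < length la \<and> j < la ! Suc i \<longrightarrow> ?rs ! i ! j < ?rs ! Suc i ! j"
    using st unfolding standard_def Let_def by auto
  have lw: "length w = sum_list la" using basic by simp
  have adj: "w ! read_pos la i j < w ! read_pos la (Suc i) j"
    if "Suc i < length la" "j < la ! Suc i" for i j
  proof -
    have "j < la ! i" using is_partition_antimono[OF basic(1), of i "Suc i"] that by simp
    moreover have "i < length la" using that by simp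
    ultimately show ?thesis
      using C[rule_format, of i j] that rows_nth_nth[OF lw, of i j] rows_nth_nth[OF lw, of "Suc i" j]
      by simp
  qed
  have "semistandard la w"
  proof (rule semistandardI[OF basic(1) lw])
    fix i j j' assume "i < length la" "j < j'" "j' < la ! i"
    then show "w ! read_pos la i j \<le> w ! read_pos la i j'"
      using R length_rows_nth[OF lw] rows_nth_nth[OF lw]
      by (simp add: sorted_wrt_iff_nth_less less_imp_le)
  qed (rule column_strict_trans[where f = "\<lambda>i j. w ! read_pos la i j", OF adj basic(1)])
  then show "sum_list la = n \<and> distinct w \<and> set w = {1..n} \<and> semistandard la w"
    using basic by blast
next
  assume a: "sum_list la = n \<and> distinct w \<and> set w = {1..n} \<and> semistandard la w"
  note ss = semistandardD[of la w]
  have lw: "length w = sum_list la" using a ss by blast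
  have R: "sorted_wrt (<) (rows la w ! i)" if i: "i < length la" for i
  proof -
    have "rows la w ! i ! j < rows la w ! i ! j'" if "j < j'" "j' < la ! i" for j j'
    proof -
      have "read_pos la i j < length w" "read_pos la i j' < length w"
        using read_pos_less_sum[OF i] that lw by auto
      moreover have "read_pos la i j \<noteq> read_pos la i j'" using that by (simp add: read_pos_def)
      ultimately have "w ! read_pos la i j \<noteq> w ! read_pos la i j'"
        using a by (simp add: nth_eq_iff_index_eq)
      then show ?thesis using ss(3)[of i j j'] a i that rows_nth_nth[OF lw i] by fastforce
    qed
    then show ?thesis using length_rows_nth[OF lw i] by (simp add: sorted_wrt_iff_nth_less)
  qed
  have C: "rows la w ! i ! j < rows la w ! Suc i ! j" if "Suc i < length la" "j < la ! Suc i" for i j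
  proof -
    have "j < la ! i" using is_partition_antimono[of la i "Suc i"] a ss(1) that by simp
    then show ?thesis
      using a ss(4)[of i "Suc i" j] that rows_nth_nth[OF lw, of i j] rows_nth_nth[OF lw, of "Suc i" j]
      by simp
  qed
  show "standard n (la, w)" unfolding standard_def Let_def using a ss(1) lw R C by auto
qed

lemma standardD:
  assumes "standard n (la, w)"
  shows "is_partition la" "length w = sum_list la" "sum_list la = n" "length w = n"
    "distinct w" "set w = {1..n}" "semistandard la w"
  using assms semistandardD(1,2) by (auto simp: standard_iff_semistandard)

lemma count_list_distinct: "distinct xs \<Longrightarrow> count_list xs v = of_bool (v \<in> set xs)"
  by (induction xs) auto

lemma distinct_if_count_list_le_1: "(\<And>v. count_list xs v \<le> 1) \<Longrightarrow> distinct xs"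
proof (induction xs)
  case Nil
  then show ?case by simp
next
  case (Cons x xs)
  have "x \<notin> set xs" using Cons.prems[of x] by (simp add: count_list_0_iff)
  moreover have "count_list xs v \<le> 1" for v using Cons.prems[of v] by (simp split: if_splits)
  ultimately show ?case using Cons.IH by simp
qed

lemma standard_count_list:
  "standard n (la, w) \<Longrightarrow> count_list w v = of_bool (1 \<le> v \<and> v \<le> n)"
  using count_list_distinct[of w v] standardD(5,6)[of n la w] by simp

definition sigma_dom :: "nat \<Rightarrow> nat list \<Rightarrow> bool" where
  "sigma_dom a w \<longleftrightarrow> (count_list w a, count_list w (Suc a)) \<in> {(1, 2), (2, 1)}"

definition sigma_triples :: "nat \<Rightarrow> nat list set" where
  "sigma_triples a = {xs. set xs \<subseteq> {a, Suc a} \<and>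
     (count_list xs a, count_list xs (Suc a)) \<in> {(1, 2), (2, 1)}}"

lemma sigma_triples_cases:
  assumes "xs \<in> sigma_triples a"
  shows "xs = [a, Suc a, Suc a] \<and> sw3 a (Suc a) xs = [a, a, Suc a] \<or>
         xs = [Suc a, a, Suc a] \<and> sw3 a (Suc a) xs = [Suc a, a, a] \<or>
         xs = [Suc a, Suc a, a] \<and> sw3 a (Suc a) xs = [a, Suc a, a] \<or>
         xs = [a, a, Suc a] \<and> sw3 a (Suc a) xs = [a, Suc a, Suc a] \<or>
         xs = [a, Suc a, a] \<and> sw3 a (Suc a) xs = [Suc a, Suc a, a] \<or>
         xs = [Suc a, a, a] \<and> sw3 a (Suc a) xs = [Suc a, a, Suc a]"
proof -
  have "length xs = 3"
    using assms sum_count_set[of xs "{a, Suc a}"] by (auto simp: sigma_triples_def)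
  then obtain x1 x2 x3 where "xs = [x1, x2, x3]" by (auto simp: numeral_3_eq_3 length_Suc_conv)
  with assms show ?thesis by (auto simp: sigma_triples_def sw3_def split: if_splits)
qed

lemma sw3_sigma_triples:
  "xs \<in> sigma_triples a \<Longrightarrow> sw3 a (Suc a) xs \<in> sigma_triples a \<and> sw3 a (Suc a) (sw3 a (Suc a) xs) = xs"
  using sigma_triples_cases[of xs a] by (auto simp: sigma_triples_def sw3_def)

lemma filter_eq_3_decomp:
  assumes "filter P w = [x1, x2, x3]"
  obtains u1 u2 u3 u4 where "w = u1 @ x1 # u2 @ x2 # u3 @ x3 # u4"
    "\<forall>x\<in>set (u1 @ u2 @ u3 @ u4). \<not> P x"
proof -
  obtain u1 v1 where 1: "w = u1 @ x1 # v1" "\<forall>u\<in>set u1. \<not> P u" "filter P v1 = [x2, x3]"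
    using assms filter_eq_Cons_iff[of P w x1 "[x2, x3]"] by metis
  obtain u2 v2 where 2: "v1 = u2 @ x2 # v2" "\<forall>u\<in>set u2. \<not> P u" "filter P v2 = [x3]"
    using 1(3) filter_eq_Cons_iff[of P v1 x2 "[x3]"] by metis
  obtain u3 u4 where 3: "v2 = u3 @ x3 # u4" "\<forall>u\<in>set u3. \<not> P u" "filter P u4 = []"
    using 2(3) filter_eq_Cons_iff[of P v2 x3 "[]"] by metis
  have "\<forall>u\<in>set u4. \<not> P u" using 3(3) by (simp add: filter_empty_conv)
  then show ?thesis using that[of u1 u2 u3 u4] 1(1,2) 2(1,2) 3(1,2) by auto
qed

lemma fill_sub_append_nonP:
  "\<forall>x\<in>set u. \<not> P x \<Longrightarrow> fill_sub P ys (u @ v) = u @ fill_sub P ys v"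
  by (induction u) auto

lemma fill_sub_nonP: "\<forall>x\<in>set u. \<not> P x \<Longrightarrow> fill_sub P ys u = u"
  using fill_sub_append_nonP[of u P ys "[]"] by simp

lemma count_list_filter: "P v \<Longrightarrow> count_list (filter P w) v = count_list w v"
  by (induction w) auto

lemma sigma_eq:
  assumes w: "w = u1 @ x1 # u2 @ x2 # u3 @ x3 # u4"
    and u: "\<forall>x\<in>set (u1 @ u2 @ u3 @ u4). x \<noteq> a \<and> x \<noteq> Suc a"
    and x: "[x1, x2, x3] \<in> sigma_triples a" and y: "sw3 a (Suc a) [x1, x2, x3] = [y1, y2, y3]"
  shows "sigma a w = u1 @ y1 # u2 @ y2 # u3 @ y3 # u4"
proof -
  let ?P = "\<lambda>x. x = a \<or> x = Suc a"
  have P: "?P x1" "?P x2" "?P x3" using x by (auto simp: sigma_triples_def)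
  then have f: "filter ?P w = [x1, x2, x3]" using w u by auto
  then have "count_list w v = count_list [x1, x2, x3] v" if "?P v" for v
    using count_list_filter[of ?P v w] that by simp
  then have "sigma_dom a w" using x unfolding sigma_triples_def sigma_dom_def by simp
  then have "sigma a w = fill_sub ?P [y1, y2, y3] w"
    using f y unfolding sigma_def sigma_dom_def Let_def by simp
  also have "\<dots> = u1 @ y1 # u2 @ y2 # u3 @ y3 # u4"
    using w u P by (simp add: fill_sub_append_nonP fill_sub_nonP)
  finally show ?thesis .
qed

lemma sigma_decomp:
  assumes "sigma_dom a w"
  obtains u1 u2 u3 u4 x1 x2 x3 y1 y2 y3 where
    "w = u1 @ x1 # u2 @ x2 # u3 @ x3 # u4"
    "sigma a w = u1 @ y1 # u2 @ y2 # u3 @ y3 # u4"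
    "\<forall>x\<in>set (u1 @ u2 @ u3 @ u4). x \<noteq> a \<and> x \<noteq> Suc a"
    "[x1, x2, x3] \<in> sigma_triples a" "sw3 a (Suc a) [x1, x2, x3] = [y1, y2, y3]"
proof -
  let ?P = "\<lambda>x. x = a \<or> x = Suc a"
  have "length (filter ?P w) = count_list w a + count_list w (Suc a)"
    by (induction w) auto
  then have "length (filter ?P w) = 3" using assms by (auto simp: sigma_dom_def)
  then obtain x1 x2 x3 where f: "filter ?P w = [x1, x2, x3]"
    by (auto simp: numeral_3_eq_3 length_Suc_conv)
  obtain u1 u2 u3 u4 where d: "w = u1 @ x1 # u2 @ x2 # u3 @ x3 # u4"
    "\<forall>x\<in>set (u1 @ u2 @ u3 @ u4). x \<noteq> a \<and> x \<noteq> Suc a"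
    by (rule filter_eq_3_decomp[OF f]) auto
  have "set [x1, x2, x3] \<subseteq> {a, Suc a}" unfolding f[symmetric] by auto
  moreover have "count_list [x1, x2, x3] v = count_list w v" if "?P v" for v
    using count_list_filter[of ?P v w] f that by simp
  ultimately have x: "[x1, x2, x3] \<in> sigma_triples a"
    using assms unfolding sigma_triples_def sigma_dom_def by simp
  have "\<exists>y1 y2 y3. sw3 a (Suc a) [x1, x2, x3] = [y1, y2, y3]"
    using sigma_triples_cases[OF x] by auto
  then obtain y1 y2 y3 where y: "sw3 a (Suc a) [x1, x2, x3] = [y1, y2, y3]" by blast
  show ?thesis using that[OF d(1) sigma_eq[OF d x y] d(2) x y] .
qed

lemma sigma_outside_dom: "\<not> sigma_dom a w \<Longrightarrow> sigma a w = w"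
  unfolding sigma_dom_def sigma_def Let_def by auto

lemma sigma_involutive: "sigma_dom a w \<Longrightarrow> sigma a (sigma a w) = w"
  by (elim sigma_decomp) (use sw3_sigma_triples in \<open>metis sigma_eq\<close>)

definition swap_letters :: "nat \<Rightarrow> nat \<Rightarrow> nat" where
  "swap_letters a v = (if v = a then Suc a else if v = Suc a then a else v)"

lemma count_list_sw3:
  "xs \<in> sigma_triples a \<Longrightarrow> count_list (sw3 a (Suc a) xs) v = count_list xs (swap_letters a v)"
  by (drule sigma_triples_cases) (auto simp: swap_letters_def)

lemma count_list_sigma:
  assumes "sigma_dom a w"
  shows "count_list (sigma a w) v = count_list w (swap_letters a v)"
  using assms
proof (rule sigma_decomp)
  fix u1 u2 u3 u4 x1 x2 x3 y1 y2 y3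
  assume d: "w = u1 @ x1 # u2 @ x2 # u3 @ x3 # u4" "sigma a w = u1 @ y1 # u2 @ y2 # u3 @ y3 # u4"
    "\<forall>x\<in>set (u1 @ u2 @ u3 @ u4). x \<noteq> a \<and> x \<noteq> Suc a"
    "[x1, x2, x3] \<in> sigma_triples a" "sw3 a (Suc a) [x1, x2, x3] = [y1, y2, y3]"
  have "count_list (u1 @ u2 @ u3 @ u4) a = 0" "count_list (u1 @ u2 @ u3 @ u4) (Suc a) = 0"
    using d(3) by (simp_all only: count_list_0_iff) blast+
  then have u: "count_list (u1 @ u2 @ u3 @ u4) v = count_list (u1 @ u2 @ u3 @ u4) (swap_letters a v)"
    by (simp add: swap_letters_def)
  have "count_list [y1, y2, y3] v = count_list [x1, x2, x3] (swap_letters a v)"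
    using count_list_sw3[OF d(4), of v] d(5) by simp
  moreover have "count_list (sigma a w) v = count_list (u1 @ u2 @ u3 @ u4) v + count_list [y1, y2, y3] v"
    by (simp add: d(2))
  moreover have "count_list w v' = count_list (u1 @ u2 @ u3 @ u4) v' + count_list [x1, x2, x3] v'"
    for v' by (simp add: d(1))
  ultimately show ?thesis using u by simp
qed

lemma length_sigma: "length (sigma a w) = length w"
proof (cases "sigma_dom a w")
  case True
  then show ?thesis by (rule sigma_decomp) simp
qed (simp add: sigma_outside_dom)

lemma sigma_triples_letters:
  assumes "xs \<in> sigma_triples a" "sw3 a (Suc a) xs = ys"
  shows "\<forall>x\<in>set xs. x = a \<or> x = Suc a" "\<forall>y\<in>set ys. y = a \<or> y = Suc a"
  using assms sw3_sigma_triples[OF assms(1)] unfolding sigma_triples_def by blast+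

lemma filter_sigma_commute:
  assumes "\<And>v. v = a \<or> v = Suc a \<Longrightarrow> Q v"
  shows "filter Q (sigma a w) = sigma a (filter Q w)"
proof (cases "sigma_dom a w")
  case True
  then show ?thesis
  proof (rule sigma_decomp)
    fix u1 u2 u3 u4 x1 x2 x3 y1 y2 y3
    assume d: "w = u1 @ x1 # u2 @ x2 # u3 @ x3 # u4" "sigma a w = u1 @ y1 # u2 @ y2 # u3 @ y3 # u4"
      "\<forall>x\<in>set (u1 @ u2 @ u3 @ u4). x \<noteq> a \<and> x \<noteq> Suc a"
      "[x1, x2, x3] \<in> sigma_triples a" "sw3 a (Suc a) [x1, x2, x3] = [y1, y2, y3]"
    have Qxy: "Q x1" "Q x2" "Q x3" "Q y1" "Q y2" "Q y3"
      using sigma_triples_letters[OF d(4,5)] assms by simp_all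
    have "sigma a (filter Q w) = filter Q u1 @ y1 # filter Q u2 @ y2 # filter Q u3 @ y3 # filter Q u4"
      by (rule sigma_eq[OF _ _ d(4,5)]) (use d(1,3) Qxy in auto)
    then show ?thesis using d(2) Qxy by simp
  qed
next
  case False
  moreover have "count_list (filter Q w) v = count_list w v" if "v = a \<or> v = Suc a" for v
    using count_list_filter[of Q] assms that by blast
  ultimately show ?thesis by (simp add: sigma_outside_dom sigma_dom_def)
qed

lemma filter_sigma_ignore:
  assumes "\<And>v. v = a \<or> v = Suc a \<Longrightarrow> \<not> Q v"
  shows "filter Q (sigma a w) = filter Q w"
proof (cases "sigma_dom a w")
  case True
  then show ?thesis
  proof (rule sigma_decomp)
    fix u1 u2 u3 u4 x1 x2 x3 y1 y2 y3
    assume d: "w = u1 @ x1 # u2 @ x2 # u3 @ x3 # u4" "sigma a w = u1 @ y1 # u2 @ y2 # u3 @ y3 # u4"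
      "\<forall>x\<in>set (u1 @ u2 @ u3 @ u4). x \<noteq> a \<and> x \<noteq> Suc a"
      "[x1, x2, x3] \<in> sigma_triples a" "sw3 a (Suc a) [x1, x2, x3] = [y1, y2, y3]"
    have "\<not> Q x1" "\<not> Q x2" "\<not> Q x3" "\<not> Q y1" "\<not> Q y2" "\<not> Q y3"
      using sigma_triples_letters[OF d(4,5)] assms by simp_all
    then show ?thesis using d(1,2) by simp
  qed
qed (simp add: sigma_outside_dom)

lemma semistandard_update:
  assumes ss: "semistandard la w" and len: "length w' = length w"
    and out: "\<And>i j. (i, j) \<in> cells la - C \<Longrightarrow>
      w' ! read_pos la i j = w ! read_pos la i j \<and> w ! read_pos la i j \<notin> {a, Suc a}"
    and inside: "\<And>i j. (i, j) \<in> C \<Longrightarrow>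
      w ! read_pos la i j \<in> {a, Suc a} \<and> w' ! read_pos la i j \<in> {a, Suc a}"
    and row: "\<And>i j j'. (i, j) \<in> C \<Longrightarrow> (i, j') \<in> C \<Longrightarrow> j < j' \<Longrightarrow>
      w' ! read_pos la i j \<le> w' ! read_pos la i j'"
    and col: "\<And>i i' j. (i, j) \<in> C \<Longrightarrow> (i', j) \<in> C \<Longrightarrow> i < i' \<Longrightarrow>
      w' ! read_pos la i j < w' ! read_pos la i' j"
  shows "semistandard la w'"
proof -
  note old = semistandardD[OF ss]
  let ?v = "\<lambda>i j. w ! read_pos la i j" and ?v' = "\<lambda>i j. w' ! read_pos la i j"
  text \<open>A letter outside \<open>{a, a + 1}\<close> compares in the same way with \<open>a\<close> and with \<open>a + 1\<close>.\<close>
  have transfer: "(?v i j \<le> ?v k l \<longrightarrow> ?v' i j \<le> ?v' k l) \<and> (?v i j < ?v k l \<longrightarrow> ?v' i j < ?v' k l)"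
    if "(i, j) \<in> cells la" "(k, l) \<in> cells la" "(i, j) \<notin> C \<or> (k, l) \<notin> C" for i j k l
    using that out[of i j] out[of k l] inside[of i j] inside[of k l]
    by (cases "(i, j) \<in> C"; cases "(k, l) \<in> C") auto
  show ?thesis
  proof (rule semistandardI[OF old(1)])
    show "length w' = sum_list la" using len old(2) by simp
  next
    fix i j j' assume h: "i < length la" "j < j'" "j' < la ! i"
    then have "(i, j) \<in> cells la" "(i, j') \<in> cells la" by (auto simp: cells_def)
    then show "?v' i j \<le> ?v' i j'"
      using row[of i j j'] transfer[of i j i j'] old(3)[OF h] h(2) by blast
  next
    fix i i' j assume h: "i < i'" "i' < length la" "j < la ! i'"
    then have "(i, j) \<in> cells la" "(i', j) \<in> cells la"
      using is_partition_antimono[OF old(1), of i i'] by (auto simp: cells_def)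
    then show "?v' i j < ?v' i' j"
      using col[of i j i'] transfer[of i j i' j] old(4)[OF h] h(1) by blast
  qed
qed

lemma sw3_relations:
  assumes x: "[x1, x2, x3] \<in> sigma_triples a" and y: "sw3 a (Suc a) [x1, x2, x3] = [y1, y2, y3]"
    and old: "R12 \<longrightarrow> x1 \<le> x2" "R13 \<longrightarrow> x1 \<le> x3" "R23 \<longrightarrow> x2 \<le> x3"
      "C12 \<longrightarrow> x2 < x1" "C13 \<longrightarrow> x3 < x1" "C23 \<longrightarrow> x3 < x2"
    and rows: "R13 \<longrightarrow> R12 \<and> R23"
    and column: "C13 \<longrightarrow> \<not> (x1 = Suc a \<and> x3 = a)"
  shows "(R12 \<longrightarrow> y1 \<le> y2) \<and> (R13 \<longrightarrow> y1 \<le> y3) \<and> (R23 \<longrightarrow> y2 \<le> y3) \<and>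
         (C12 \<longrightarrow> y2 < y1) \<and> (C13 \<longrightarrow> y3 < y1) \<and> (C23 \<longrightarrow> y3 < y2)"
  using sigma_triples_cases[OF x] y old rows column by auto

text \<open>The only configuration of the three letters \<open>a\<close>, \<open>a + 1\<close> that \<open>sw3\<close> could turn into a
  column violation is \<open>a + 1\<close> first and \<open>a\<close> last in one column; it cannot occur, since either
  a letter strictly between \<open>a\<close> and \<open>a + 1\<close> or a fourth letter \<open>a\<close> or \<open>a + 1\<close> would be forced.\<close>

lemma semistandard_no_column_triple:
  assumes ss: "semistandard la w"
    and c: "(r1, s) \<in> cells la" "(r2, s2) \<in> cells la" "(r3, s) \<in> cells la"
    and order: "read_pos la r1 s < read_pos la r2 s2" "read_pos la r2 s2 < read_pos la r3 s"
    and only: "\<And>i j. (i, j) \<in> cells la \<Longrightarrow> w ! read_pos la i j \<in> {a, Suc a} \<Longrightarrow>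
      (i, j) \<in> {(r1, s), (r2, s2), (r3, s)}"
    and vals: "w ! read_pos la r1 s = Suc a" "w ! read_pos la r2 s2 \<in> {a, Suc a}"
      "w ! read_pos la r3 s = a"
  shows False
proof -
  note old = semistandardD[OF ss]
  let ?v = "\<lambda>i j. w ! read_pos la i j"
  have b: "r1 < length la" "s < la ! r1" "r2 < length la" "s2 < la ! r2" "r3 < length la" "s < la ! r3"
    using c by (auto simp: cells_def)
  have o12: "r2 < r1 \<or> r1 = r2 \<and> s < s2" and o23: "r3 < r2 \<or> r2 = r3 \<and> s2 < s"
    using order read_pos_less_iff b by auto
  then have r31: "r3 < r1" by auto
  show False
  proof (cases "Suc r3 < r1")
    case True
    have "s < la ! Suc r3" using is_partition_antimono[OF old(1), of "Suc r3" r1] True b by simp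
    then have "?v r3 s < ?v (Suc r3) s" using old(4)[of r3 "Suc r3" s] True b by simp
    moreover have "?v (Suc r3) s < ?v r1 s" using old(4)[of "Suc r3" r1 s] True b by simp
    ultimately show False using vals by simp
  next
    case False
    then have r1: "r1 = Suc r3" using r31 by simp
    from o12 o23 r1 consider "r2 = r1" "s < s2" | "r2 = r3" "s2 < s" by auto
    then show False
    proof cases
      case 1
      have "s2 < la ! r3" using is_partition_antimono[OF old(1), of r3 r1] b 1 r31 by simp
      then have "(r3, s2) \<in> cells la" using b by (simp add: cells_def)
      moreover have "?v r3 s \<le> ?v r3 s2" using old(3)[of r3 s s2] b 1 \<open>s2 < la ! r3\<close> by simp
      moreover have "?v r3 s2 < ?v r1 s2" using old(4)[of r3 r1 s2] b 1 r31 by simp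
      moreover have "?v r1 s \<le> ?v r1 s2" using old(3)[of r1 s s2] b 1 by simp
      ultimately show False using only[of r3 s2] vals 1 r1 by auto
    next
      case 2
      have "(r1, s2) \<in> cells la" using b 2 by (simp add: cells_def)
      moreover have "?v r1 s2 \<le> ?v r1 s" using old(3)[of r1 s2 s] b 2 by simp
      moreover have "?v r3 s2 < ?v r1 s2" using old(4)[of r3 r1 s2] b 2 r31 by simp
      moreover have "?v r3 s2 \<le> ?v r3 s" using old(3)[of r3 s2 s] b 2 by simp
      ultimately show False using only[of r1 s2] vals 2 r1 by auto
    qed
  qed
qed

lemma sigma_semistandard:
  assumes dom: "sigma_dom a w" and ss: "semistandard la w"
  shows "semistandard la (sigma a w)"
  using dom
proof (rule sigma_decomp)
  fix u1 u2 u3 u4 x1 x2 x3 y1 y2 y3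
  assume d: "w = u1 @ x1 # u2 @ x2 # u3 @ x3 # u4" "sigma a w = u1 @ y1 # u2 @ y2 # u3 @ y3 # u4"
    "\<forall>x\<in>set (u1 @ u2 @ u3 @ u4). x \<noteq> a \<and> x \<noteq> Suc a"
    "[x1, x2, x3] \<in> sigma_triples a" "sw3 a (Suc a) [x1, x2, x3] = [y1, y2, y3]"
  note old = semistandardD[OF ss]
  let ?w' = "sigma a w"
  define p1 p2 p3 where "p1 = length u1" and "p2 = Suc (length u1 + length u2)"
    and "p3 = Suc (Suc (length u1 + length u2 + length u3))"
  have ps: "p1 < p2" "p2 < p3" "p3 < length w" using d(1) by (simp_all add: p1_def p2_def p3_def)
  have wx: "w ! p1 = x1" "w ! p2 = x2" "w ! p3 = x3" "?w' ! p1 = y1" "?w' ! p2 = y2" "?w' ! p3 = y3"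
    using d(1,2) by (simp_all add: p1_def p2_def p3_def nth_append)
  have other: "?w' ! q = w ! q \<and> w ! q \<notin> {a, Suc a}"
    if "q < length w" "q \<notin> {p1, p2, p3}" for q
  proof -
    have "?w' ! q = w ! q \<and> w ! q \<in> set (u1 @ u2 @ u3 @ u4)"
      using that d(1,2) by (auto simp: p1_def p2_def p3_def nth_append nth_Cons')
    then show ?thesis using d(3) by auto
  qed
  have letters: "x \<in> {a, Suc a}" if "x \<in> {x1, x2, x3, y1, y2, y3}" for x
    using sigma_triples_letters[OF d(4,5)] that by auto
  have cell: "\<exists>r s. (r, s) \<in> cells la \<and> p = read_pos la r s" if "p < length w" for p
    using read_pos_surj[of p la] that old(2) by (auto simp: cells_def)
  have "p1 < length w" "p2 < length w" using ps by simp_all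
  obtain r1 s1 where c1: "(r1, s1) \<in> cells la" "p1 = read_pos la r1 s1"
    using cell[OF \<open>p1 < length w\<close>] by blast
  obtain r2 s2 where c2: "(r2, s2) \<in> cells la" "p2 = read_pos la r2 s2"
    using cell[OF \<open>p2 < length w\<close>] by blast
  obtain r3 s3 where c3: "(r3, s3) \<in> cells la" "p3 = read_pos la r3 s3" using cell[OF ps(3)] by blast
  note c = c1(1) c2(1) c3(1) and pc = c1(2) c2(2) c3(2)
  let ?C = "{(r1, s1), (r2, s2), (r3, s3)}"
  have b: "r1 < length la" "s1 < la ! r1" "r2 < length la" "s2 < la ! r2" "r3 < length la" "s3 < la ! r3"
    using c unfolding cells_def by simp_all
  have o12: "r2 < r1 \<or> r1 = r2 \<and> s1 < s2" and o23: "r3 < r2 \<or> r2 = r3 \<and> s2 < s3"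
    and o13: "r3 < r1 \<or> r1 = r3 \<and> s1 < s3"
    using ps pc read_pos_less_iff b by auto
  have in_C: "read_pos la i j \<in> {p1, p2, p3} \<longleftrightarrow> (i, j) \<in> ?C" if "(i, j) \<in> cells la" for i j
    using that c read_pos_inj[of i la j] unfolding pc by (auto simp: cells_def)
  have new: "(r1 = r2 \<longrightarrow> y1 \<le> y2) \<and> (r1 = r3 \<longrightarrow> y1 \<le> y3) \<and> (r2 = r3 \<longrightarrow> y2 \<le> y3) \<and>
      (s1 = s2 \<longrightarrow> y2 < y1) \<and> (s1 = s3 \<longrightarrow> y3 < y1) \<and> (s2 = s3 \<longrightarrow> y3 < y2)"
  proof (rule sw3_relations[OF d(4,5)])
    show "r1 = r2 \<longrightarrow> x1 \<le> x2" "r1 = r3 \<longrightarrow> x1 \<le> x3" "r2 = r3 \<longrightarrow> x2 \<le> x3"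
      using o12 o13 o23 old(3) b wx pc by auto
    show "s1 = s2 \<longrightarrow> x2 < x1" "s1 = s3 \<longrightarrow> x3 < x1" "s2 = s3 \<longrightarrow> x3 < x2"
      using o12 o13 o23 old(4) b wx pc by auto
    show "r1 = r3 \<longrightarrow> r1 = r2 \<and> r2 = r3" using o12 o13 o23 by auto
    show "s1 = s3 \<longrightarrow> \<not> (x1 = Suc a \<and> x3 = a)"
    proof (intro impI notI)
      assume "s1 = s3" "x1 = Suc a \<and> x3 = a"
      moreover have "(i, j) \<in> ?C" if "(i, j) \<in> cells la" "w ! read_pos la i j \<in> {a, Suc a}" for i j
        using that other[of "read_pos la i j"] in_C[of i j] read_pos_less_sum old(2)
        by (auto simp: cells_def)
      ultimately show False
        using semistandard_no_column_triple[OF ss, of r1 s1 r2 s2 r3] c ps pc wx letters by auto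
    qed
  qed
  show "semistandard la ?w'"
  proof (rule semistandard_update[OF ss length_sigma, where C = ?C])
    fix i j assume "(i, j) \<in> cells la - ?C"
    then show "?w' ! read_pos la i j = w ! read_pos la i j \<and> w ! read_pos la i j \<notin> {a, Suc a}"
      using other[of "read_pos la i j"] in_C[of i j] read_pos_less_sum old(2) by (auto simp: cells_def)
  next
    fix i j assume "(i, j) \<in> ?C"
    then show "w ! read_pos la i j \<in> {a, Suc a} \<and> ?w' ! read_pos la i j \<in> {a, Suc a}"
      using letters wx pc by auto
  next
    fix i j j' assume "(i, j) \<in> ?C" "(i, j') \<in> ?C" "j < j'"
    then have "(i, j) = (r1, s1) \<and> (i, j') = (r2, s2) \<or> (i, j) = (r1, s1) \<and> (i, j') = (r3, s3) \<or>
        (i, j) = (r2, s2) \<and> (i, j') = (r3, s3)"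
      using o12 o13 o23 by auto
    then show "?w' ! read_pos la i j \<le> ?w' ! read_pos la i j'"
      using new wx unfolding pc by auto
  next
    fix i i' j assume "(i, j) \<in> ?C" "(i', j) \<in> ?C" "i < i'"
    then have "(i', j) = (r1, s1) \<and> (i, j) = (r2, s2) \<or> (i', j) = (r1, s1) \<and> (i, j) = (r3, s3) \<or>
        (i', j) = (r2, s2) \<and> (i, j) = (r3, s3)"
      using o12 o13 o23 by auto
    then show "?w' ! read_pos la i j < ?w' ! read_pos la i' j"
      using new wx unfolding pc by auto
  qed
qed

lemma foldr_upt_induct:
  assumes "k \<le> m" "Q m w" "\<And>a x. k \<le> a \<Longrightarrow> a < m \<Longrightarrow> Q (Suc a) x \<Longrightarrow> Q a (f a x)"
  shows "Q k (foldr f [k..<m] w)"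
  using assms
proof (induction m arbitrary: w)
  case (Suc m)
  show ?case
  proof (cases "k = Suc m")
    case False
    then have "Q k (foldr f [k..<m] (f m w))" using Suc by simp
    then show ?thesis using False Suc.prems(1) by simp
  qed (use Suc.prems in simp)
qed simp

lemma fold_upt_induct:
  assumes "k \<le> m" "Q k w" "\<And>a x. k \<le> a \<Longrightarrow> a < m \<Longrightarrow> Q a x \<Longrightarrow> Q (Suc a) (f a x)"
  shows "Q m (fold f [k..<m] w)"
  using assms
proof (induction m)
  case (Suc m)
  then show ?case by (cases "k = Suc m") auto
qed simp

lemma fold_foldr_upt_cancel:
  assumes "k \<le> m" "Q m z"
    and "\<And>a x. k \<le> a \<Longrightarrow> a < m \<Longrightarrow> Q (Suc a) x \<Longrightarrow> Q a (f a x) \<and> f a (f a x) = x"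
  shows "fold f [k..<m] (foldr f [k..<m] z) = z"
  using assms
proof (induction m arbitrary: z)
  case (Suc m)
  show ?case
  proof (cases "k = Suc m")
    case False
    then have "fold f [k..<m] (foldr f [k..<m] (f m z)) = f m z" using Suc by simp
    then show ?thesis using False Suc.prems by simp
  qed simp
qed simp

lemma foldr_fold_upt_cancel:
  assumes "k \<le> m" "Q k x"
    and "\<And>a x. k \<le> a \<Longrightarrow> a < m \<Longrightarrow> Q a x \<Longrightarrow> Q (Suc a) (f a x) \<and> f a (f a x) = x"
  shows "foldr f [k..<m] (fold f [k..<m] x) = x"
  using assms
proof (induction m)
  case (Suc m)
  show ?case
  proof (cases "k = Suc m")
    case False
    then have "k \<le> m" using Suc.prems by simp
    have "Q m (fold f [k..<m] x)"
      by (rule fold_upt_induct[where Q = Q, OF \<open>k \<le> m\<close> Suc.prems(2)]) (use Suc.prems(3) in simp)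
    then show ?thesis using Suc \<open>k \<le> m\<close> by simp
  qed simp
qed simp

definition doubled :: "nat \<Rightarrow> nat \<Rightarrow> nat list \<Rightarrow> bool" where
  "doubled c N w \<longleftrightarrow> length w = Suc N \<and>
     (\<forall>v. count_list w v = (if v = c then 2 else of_bool (1 \<le> v \<and> v \<le> N)))"

lemma doubled_sigma:
  assumes "doubled c N w" "1 \<le> a" "Suc a \<le> N" "c = a \<or> c = Suc a"
  shows "sigma_dom a w" "doubled (swap_letters a c) N (sigma a w)"
proof -
  show dom: "sigma_dom a w" using assms unfolding doubled_def sigma_dom_def by auto
  show "doubled (swap_letters a c) N (sigma a w)"
    using assms count_list_sigma[OF dom] length_sigma
    unfolding doubled_def swap_letters_def by auto
qed

lemma sigma_chain_semistandard:
  assumes "semistandard la w" "doubled (Suc n) (Suc n) w"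
  shows "semistandard la (sigma_chain n w) \<and> doubled 1 (Suc n) (sigma_chain n w)"
  unfolding sigma_chain_def
proof (rule foldr_upt_induct[where Q = "\<lambda>k x. semistandard la x \<and> doubled k (Suc n) x"])
  fix a x assume "1 \<le> a" "a < Suc n" "semistandard la x \<and> doubled (Suc a) (Suc n) x"
  then show "semistandard la (sigma a x) \<and> doubled a (Suc n) (sigma a x)"
    using doubled_sigma[of "Suc a" "Suc n" x a] sigma_semistandard by (auto simp: swap_letters_def)
qed (use assms in simp_all)

lemma fold_sigma_semistandard:
  assumes "semistandard la x" "doubled 1 (Suc n) x"
  shows "semistandard la (fold sigma [1..<Suc n] x) \<and> doubled (Suc n) (Suc n) (fold sigma [1..<Suc n] x)"
proof (rule fold_upt_induct[where Q = "\<lambda>k x. semistandard la x \<and> doubled k (Suc n) x"])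
  fix a x assume "1 \<le> a" "a < Suc n" "semistandard la x \<and> doubled a (Suc n) x"
  then show "semistandard la (sigma a x) \<and> doubled (Suc a) (Suc n) (sigma a x)"
    using doubled_sigma[of a "Suc n" x a] sigma_semistandard by (auto simp: swap_letters_def)
qed (use assms in simp_all)

lemma sigma_chain_fold_sigma:
  assumes "doubled 1 (Suc n) x"
  shows "sigma_chain n (fold sigma [1..<Suc n] x) = x"
  unfolding sigma_chain_def
proof (rule foldr_fold_upt_cancel[where Q = "\<lambda>k x. doubled k (Suc n) x"])
  fix a x assume "1 \<le> a" "a < Suc n" "doubled a (Suc n) x"
  then show "doubled (Suc a) (Suc n) (sigma a x) \<and> sigma a (sigma a x) = x"
    using doubled_sigma[of a "Suc n" x a] sigma_involutive by (auto simp: swap_letters_def)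
qed (use assms in simp_all)

lemma fold_sigma_sigma_chain:
  assumes "doubled (Suc n) (Suc n) z"
  shows "fold sigma [1..<Suc n] (sigma_chain n z) = z"
  unfolding sigma_chain_def
proof (rule fold_foldr_upt_cancel[where Q = "\<lambda>k x. doubled k (Suc n) x"])
  fix a x assume "1 \<le> a" "a < Suc n" "doubled (Suc a) (Suc n) x"
  then show "doubled a (Suc n) (sigma a x) \<and> sigma a (sigma a x) = x"
    using doubled_sigma[of "Suc a" "Suc n" x a] sigma_involutive by (auto simp: swap_letters_def)
qed (use assms in simp_all)

definition old_row :: "nat list \<Rightarrow> nat list \<Rightarrow> nat \<Rightarrow> nat list" where
  "old_row la w i = (if i < length la then rows la w ! i else [])"

definition padded_rows :: "nat list \<Rightarrow> nat list \<Rightarrow> nat list \<Rightarrow> nat \<Rightarrow> nat list list" where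
  "padded_rows la w mu x =
     map (\<lambda>i. old_row la w i @ replicate (mu ! i - length (old_row la w i)) x) [0..<length mu]"

definition horizontal_2_strip :: "nat list \<Rightarrow> nat list \<Rightarrow> bool" where
  "horizontal_2_strip la mu \<longleftrightarrow> is_partition mu \<and> cells la \<subseteq> cells mu \<and>
     card (cells mu - cells la) = 2 \<and>
     (\<forall>c \<in> cells mu - cells la. \<forall>d \<in> cells mu - cells la. c \<noteq> d \<longrightarrow> snd c \<noteq> snd d)"

lemma A_set_eq:
  "A_set (la, w) =
     {(mu, word_of_rows (padded_rows la w mu (Suc (length w)))) | mu. horizontal_2_strip la mu}"
  unfolding A_set_def Let_def fst_conv snd_conv padded_rows_def old_row_def horizontal_2_strip_def ..

lemma cells_subset_partition:
  assumes "is_partition la" "cells la \<subseteq> cells mu"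
  shows "length la \<le> length mu" "i < length la \<Longrightarrow> la ! i \<le> mu ! i"
proof -
  show "length la \<le> length mu"
  proof (rule ccontr)
    assume "\<not> length la \<le> length mu"
    then have "(length mu, 0) \<in> cells la"
      using is_partition_pos[OF assms(1), of "length mu"] by (auto simp: cells_def)
    then show False using assms(2) by (auto simp: cells_def)
  qed
  show "la ! i \<le> mu ! i" if "i < length la"
  proof -
    have "(i, la ! i - 1) \<in> cells la" using is_partition_pos[OF assms(1) that] that by (auto simp: cells_def)
    then show ?thesis using assms(2) by (auto simp: cells_def)
  qed
qed

lemma length_old_row:
  "length w = sum_list la \<Longrightarrow> length (old_row la w i) = (if i < length la then la ! i else 0)"
  by (simp add: old_row_def length_rows_nth)

lemma map_length_padded_rows:
  assumes "length w = sum_list la" "is_partition la" "cells la \<subseteq> cells mu"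
  shows "map length (padded_rows la w mu x) = mu"
  using cells_subset_partition[OF assms(2,3)] length_old_row[OF assms(1)]
  by (intro nth_equalityI) (auto simp: padded_rows_def)

lemma padded_rows_read_pos:
  assumes "length w = sum_list la" "is_partition la" "cells la \<subseteq> cells mu" "(i, j) \<in> cells mu"
  shows "word_of_rows (padded_rows la w mu x) ! read_pos mu i j =
    (if (i, j) \<in> cells la then w ! read_pos la i j else x)"
proof -
  let ?R = "padded_rows la w mu x"
  have ml: "map length ?R = mu" by (rule map_length_padded_rows[OF assms(1-3)])
  then have "length (word_of_rows ?R) = sum_list mu" by (simp add: length_word_of_rows)
  then have "word_of_rows ?R ! read_pos mu i j = ?R ! i ! j"
    using rows_nth_nth[of "word_of_rows ?R" mu i j] rows_word_of_rows[OF ml] assms(4)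
    by (simp add: cells_def)
  also have "\<dots> = (if (i, j) \<in> cells la then w ! read_pos la i j else x)"
    using assms(4) length_old_row[OF assms(1), of i] rows_nth_nth[OF assms(1), of i j]
      cells_subset_partition[OF assms(2,3)]
    by (auto simp: padded_rows_def cells_def nth_append old_row_def)
  finally show ?thesis .
qed

lemma filter_padded_rows:
  assumes "length w = sum_list la" "is_partition la" "cells la \<subseteq> cells mu" "x \<notin> set w"
  shows "filter (\<lambda>v. v \<noteq> x) (word_of_rows (padded_rows la w mu x)) = w"
proof -
  have "\<forall>v\<in>set (old_row la w i). v \<noteq> x" for i
    using assms(1,4) by (auto simp: old_row_def rows_nth dest!: in_set_takeD in_set_dropD)
  then have "map (filter (\<lambda>v. v \<noteq> x)) (padded_rows la w mu x) = map (old_row la w) [0..<length mu]"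
    by (simp add: padded_rows_def filter_id_conv)
  also have "\<dots> = rows la w @ replicate (length mu - length la) []"
    using cells_subset_partition(1)[OF assms(2,3)]
    by (intro nth_equalityI) (auto simp: old_row_def nth_append)
  finally have "map (filter (\<lambda>v. v \<noteq> x)) (padded_rows la w mu x) = rows la w @ replicate (length mu - length la) []" .
  then show ?thesis
    unfolding filter_word_of_rows using word_of_rows_rows[OF assms(1)]
    by (simp add: word_of_rows_append word_of_rows_def)
qed

lemma cells_partition_down:
  "is_partition la \<Longrightarrow> (i', j) \<in> cells la \<Longrightarrow> i \<le> i' \<Longrightarrow> j' \<le> j \<Longrightarrow> (i, j') \<in> cells la"
  using is_partition_antimono[of la i i'] by (fastforce simp: cells_def)

lemma card_cells_diff:
  "cells la \<subseteq> cells mu \<Longrightarrow> card (cells mu - cells la) = sum_list mu - sum_list la"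
  by (simp add: card_Diff_subset finite_cells card_cells)

lemma count_list_conv_length_filter: "count_list xs y = length (filter (\<lambda>x. x = y) xs)"
  by (induction xs) auto

lemma A_set_semistandard:
  assumes st: "standard m (la, w)" and s: "s \<in> A_set (la, w)"
  shows "semistandard (fst s) (snd s) \<and> doubled (Suc m) (Suc m) (snd s) \<and>
    filter (\<lambda>v. v \<noteq> Suc m) (snd s) = w"
proof -
  note T = standardD[OF st]
  obtain mu where s: "s = (mu, word_of_rows (padded_rows la w mu (Suc m)))"
    and strip: "horizontal_2_strip la mu"
    using s T(4) by (auto simp: A_set_eq)
  note mu = strip[unfolded horizontal_2_strip_def]
  let ?z = "word_of_rows (padded_rows la w mu (Suc m))"
  let ?v = "\<lambda>i j. ?z ! read_pos mu i j"
  have lz: "length ?z = sum_list mu"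
    using map_length_padded_rows[OF T(2,1)] mu by (simp add: length_word_of_rows)
  have ent: "?v i j = (if (i, j) \<in> cells la then w ! read_pos la i j else Suc m)"
    if "(i, j) \<in> cells mu" for i j
    using padded_rows_read_pos[OF T(2,1) _ that] mu by simp
  have small: "w ! read_pos la i j \<le> m" if "(i, j) \<in> cells la" for i j
    using that read_pos_less_sum[of i la j] T(2,6) nth_mem[of "read_pos la i j" w]
    by (force simp: cells_def)
  have f: "filter (\<lambda>v. v \<noteq> Suc m) ?z = w"
    using filter_padded_rows[OF T(2,1)] mu T(6) by simp
  have smu: "sum_list mu = Suc (Suc m)" using mu card_cells_diff[of la mu] T(3) by simp
  have count_max: "count_list ?z (Suc m) = 2"
    using sum_length_filter_compl[of "\<lambda>v. v \<noteq> Suc m" ?z] f T(4) lz smu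
    by (simp add: count_list_conv_length_filter)
  have "count_list ?z v = count_list w v" if "v \<noteq> Suc m" for v
    using count_list_filter[of "\<lambda>v. v \<noteq> Suc m" v ?z] f that by simp
  then have "doubled (Suc m) (Suc m) ?z"
    using count_max standard_count_list[OF st] lz smu unfolding doubled_def by auto
  moreover have "semistandard mu ?z"
  proof (rule semistandardI[OF mu[THEN conjunct1] lz])
    fix i j j' assume h: "i < length mu" "j < j'" "j' < mu ! i"
    then have c: "(i, j) \<in> cells mu" "(i, j') \<in> cells mu" by (auto simp: cells_def)
    show "?v i j \<le> ?v i j'"
    proof (cases "(i, j') \<in> cells la")
      case True
      then have "(i, j) \<in> cells la" using cells_partition_down[OF T(1) True, of i j] h by simp
      then show ?thesis using ent[OF c(1)] ent[OF c(2)] True semistandardD(3)[OF T(7), of i j j'] h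
        by (simp add: cells_def)
    qed (use ent[OF c(1)] ent[OF c(2)] small[of i j] in auto)
  next
    fix i i' j assume h: "i < i'" "i' < length mu" "j < mu ! i'"
    then have c: "(i, j) \<in> cells mu" "(i', j) \<in> cells mu"
      using cells_partition_down[OF mu[THEN conjunct1], of i' j i j] by (auto simp: cells_def)
    have "(i, j) \<in> cells la"
    proof (rule ccontr)
      assume out: "(i, j) \<notin> cells la"
      then have "(i', j) \<notin> cells la" using cells_partition_down[OF T(1), of i' j i j] h by auto
      then show False
        using mu[THEN conjunct2, THEN conjunct2, THEN conjunct2, rule_format, of "(i, j)" "(i', j)"]
          out c h by auto
    qed
    then show "?v i j < ?v i' j"
      using ent[OF c(1)] ent[OF c(2)] small[of i j] semistandardD(4)[OF T(7), of i i' j] h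
      by (auto simp: cells_def)
  qed
  ultimately show ?thesis using s f by simp
qed

lemma sorted_max_split:
  fixes r :: "'a :: linorder list"
  assumes "sorted r" "\<forall>x\<in>set r. x \<le> M"
  shows "r = filter (\<lambda>x. x \<noteq> M) r @ replicate (length r - length (filter (\<lambda>x. x \<noteq> M) r)) M"
  using assms
proof (induction r)
  case (Cons x r)
  show ?case
  proof (cases "x = M")
    case True
    then have "\<forall>y\<in>set r. y = M" using Cons.prems by (auto intro: antisym)
    then have "filter (\<lambda>x. x \<noteq> M) r = []" "r = replicate (length r) M"
      by (auto simp: filter_empty_conv intro: replicate_eqI)
    then show ?thesis using True by simp
  next
    case False
    then show ?thesis using Cons length_filter_le[of "\<lambda>x. x \<noteq> M" r] by (simp add: Suc_diff_le)
  qed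
qed simp

lemma semistandard_remove_max:
  assumes ss: "semistandard mu z" and le: "\<forall>x\<in>set z. x \<le> M"
  obtains la where "semistandard la (filter (\<lambda>x. x \<noteq> M) z)" "cells la \<subseteq> cells mu"
    "cells mu - cells la = {c \<in> cells mu. z ! read_pos mu (fst c) (snd c) = M}"
    "z = word_of_rows (padded_rows la (filter (\<lambda>x. x \<noteq> M) z) mu M)"
proof -
  note old = semistandardD[OF ss]
  let ?v = "\<lambda>i j. z ! read_pos mu i j"
  define FR where "FR = map (filter (\<lambda>x. x \<noteq> M)) (rows mu z)"
  define L where "L = map length FR"
  have lens: "length FR = length mu" "length L = length mu" by (simp_all add: FR_def L_def)
  have L_nth: "L ! i = length (FR ! i)" if "i < length mu" for i using that lens by (simp add: L_def)
  have row_z: "length (rows mu z ! i) = mu ! i" "rows mu z ! i ! j = ?v i j"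
    if "i < length mu" "j < mu ! i" for i j
    using length_rows_nth[OF old(2)] rows_nth_nth[OF old(2)] that by auto
  have row_split: "rows mu z ! i = FR ! i @ replicate (mu ! i - L ! i) M" if i: "i < length mu" for i
  proof -
    have "sorted (rows mu z ! i)"
      using old(3)[OF i] row_z[OF i] length_rows_nth[OF old(2) i]
      by (auto simp: sorted_iff_nth_mono le_less)
    moreover have "\<forall>x\<in>set (rows mu z ! i). x \<le> M"
      using le i old(2) by (auto simp: rows_nth dest!: in_set_takeD in_set_dropD)
    ultimately show ?thesis
      using sorted_max_split[of "rows mu z ! i" M] length_rows_nth[OF old(2) i] i
      by (simp add: FR_def L_def)
  qed
  have L_le: "L ! i \<le> mu ! i" if "i < length mu" for i
    using length_filter_le[of _ "rows mu z ! i"] length_rows_nth[OF old(2) that] that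
    by (simp add: FR_def L_def)
  have not_max: "?v i j \<noteq> M \<longleftrightarrow> j < L ! i" if "i < length mu" "j < mu ! i" for i j
  proof -
    have "\<forall>x\<in>set (FR ! i). x \<noteq> M" using that(1) by (simp add: FR_def)
    then show ?thesis
      using row_split[OF that(1)] row_z[OF that] L_le[OF that(1)] that(2) L_nth[OF that(1)]
      by (cases "j < L ! i") (auto simp: nth_append)
  qed
  have FR_nth: "FR ! i ! j = ?v i j" if "i < length mu" "j < L ! i" for i j
    using row_split[OF that(1)] row_z[of i j] L_le[OF that(1)] that L_nth[OF that(1)]
    by (simp add: nth_append)
  have L_antimono: "L ! i' \<le> L ! i" if "i \<le> i'" "i' < length mu" for i i'
  proof (rule ccontr)
    assume "\<not> L ! i' \<le> L ! i"
    then have j: "L ! i < L ! i'" by simp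
    let ?j = "L ! i"
    have "?j < mu ! i'" "?j < mu ! i"
      using j L_le[OF that(2)] is_partition_antimono[OF old(1) that] by auto
    moreover have "i \<noteq> i'" using j by auto
    ultimately have "?v i ?j < ?v i' ?j" using old(4)[of i i' ?j] that by simp
    moreover have "?v i' ?j \<le> M"
      using le nth_mem read_pos_less_sum[of i' mu ?j] old(2) \<open>?j < mu ! i'\<close> that(2) by auto
    ultimately show False using not_max[of i ?j] \<open>?j < mu ! i\<close> that by simp
  qed
  define la where "la = takeWhile (\<lambda>l. 0 < l) L"
  have la_len: "length la \<le> length mu" using lens length_takeWhile_le[of _ L] by (simp add: la_def)
  have la_nth: "la ! i = L ! i" if "i < length la" for i
    using that by (simp add: la_def takeWhile_nth)
  have L_zero: "L ! i = 0" if "length la \<le> i" "i < length mu" for i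
  proof -
    have "\<not> 0 < L ! length la"
      using nth_length_takeWhile[of "\<lambda>l. 0 < l" L] that lens by (simp add: la_def)
    then show ?thesis using L_antimono[OF that] by simp
  qed
  have cells_la: "(i, j) \<in> cells la \<longleftrightarrow> (i, j) \<in> cells mu \<and> j < L ! i" for i j
  proof (cases "i < length la")
    case True
    then have "i < length mu" using la_len by simp
    then show ?thesis using True la_nth L_le[of i] by (auto simp: cells_def)
  qed (use L_zero[of i] in \<open>auto simp: cells_def\<close>)
  have part: "is_partition la"
    unfolding is_partition_def
    using L_antimono la_nth la_len
    by (auto simp: sorted_wrt_iff_nth_less la_def dest: set_takeWhileD)
  define w where "w = filter (\<lambda>x. x \<noteq> M) z"
  have FR_empty: "FR ! i = []" if "length la \<le> i" "i < length mu" for i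
    using L_zero[OF that] lens that by (simp add: L_def)
  have "w = word_of_rows FR"
    using filter_word_of_rows[of _ "rows mu z"] word_of_rows_rows[OF old(2)] by (simp add: w_def FR_def)
  moreover have "word_of_rows (drop (length la) FR) = []"
    using FR_empty la_len lens by (auto simp: word_of_rows_def in_set_conv_nth)
  ultimately have w_FR: "w = word_of_rows (take (length la) FR)"
    using word_of_rows_append[of "take (length la) FR" "drop (length la) FR"] by simp
  have map_len: "map length (take (length la) FR) = la"
    using lens la_len la_nth by (intro nth_equalityI) (auto simp: L_def)
  then have lw: "length w = sum_list la" using w_FR by (simp add: length_word_of_rows)
  have rows_w: "rows la w = take (length la) FR" using rows_word_of_rows[OF map_len] w_FR by simp
  have w_ent: "w ! read_pos la i j = ?v i j" if "(i, j) \<in> cells la" for i j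
  proof -
    have "i < length la" "j < la ! i" "i < length mu" "j < L ! i"
      using that cells_la[of i j] by (auto simp: cells_def)
    then show ?thesis using rows_nth_nth[OF lw, of i j] rows_w FR_nth[of i j] by simp
  qed
  have "semistandard la w"
  proof (rule semistandardI[OF part lw])
    fix i j j' assume "i < length la" "j < j'" "j' < la ! i"
    then have c: "(i, j) \<in> cells la" "(i, j') \<in> cells la" by (auto simp: cells_def)
    then have "i < length mu" "j' < mu ! i" using cells_la[of i j'] by (auto simp: cells_def)
    then show "w ! read_pos la i j \<le> w ! read_pos la i j'"
      using w_ent[OF c(1)] w_ent[OF c(2)] old(3)[of i j j'] \<open>j < j'\<close> by simp
  next
    fix i i' j assume h: "i < i'" "i' < length la" "j < la ! i'"
    then have c: "(i, j) \<in> cells la" "(i', j) \<in> cells la"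
      using cells_partition_down[OF part, of i' j i j] by (auto simp: cells_def)
    then have "i' < length mu" "j < mu ! i'" using cells_la[of i' j] by (auto simp: cells_def)
    then show "w ! read_pos la i j < w ! read_pos la i' j"
      using w_ent[OF c(1)] w_ent[OF c(2)] old(4)[of i i' j] h(1) by simp
  qed
  moreover have "cells la \<subseteq> cells mu" using cells_la by auto
  moreover have "cells mu - cells la = {c \<in> cells mu. ?v (fst c) (snd c) = M}"
  proof (rule set_eqI)
    fix c :: "nat \<times> nat"
    show "c \<in> cells mu - cells la \<longleftrightarrow> c \<in> {c \<in> cells mu. ?v (fst c) (snd c) = M}"
      using cells_la[of "fst c" "snd c"] not_max[of "fst c" "snd c"] by (auto simp: cells_def)
  qed
  moreover have "padded_rows la w mu M = rows mu z"
  proof (rule nth_equalityI)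
    fix i assume "i < length (padded_rows la w mu M)"
    then have i: "i < length mu" by (simp add: padded_rows_def)
    have "old_row la w i = FR ! i" using rows_w FR_empty[of i] i by (simp add: old_row_def)
    then show "padded_rows la w mu M ! i = rows mu z ! i"
      using row_split[OF i] i by (simp add: padded_rows_def L_def lens)
  qed (simp add: padded_rows_def)
  then have "z = word_of_rows (padded_rows la w mu M)" using word_of_rows_rows[OF old(2)] by simp
  ultimately show ?thesis using that unfolding w_def by blast
qed

lemma distinct_count_list_of_bool:
  assumes "\<And>v. count_list w v = of_bool (P v)"
  shows "distinct w" "set w = {v. P v}"
  using distinct_if_count_list_le_1[of w] assms count_list_0_iff[of w]
  by (auto simp: of_bool_def split: if_splits) (metis zero_neq_one)+

lemma A_set_of_semistandard:
  assumes ss: "semistandard mu z" and d: "doubled (Suc m) (Suc m) z"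
  shows "\<exists>la w. standard m (la, w) \<and> (mu, z) \<in> A_set (la, w)"
proof -
  note old = semistandardD[OF ss]
  let ?M = "Suc m" and ?v = "\<lambda>i j. z ! read_pos mu i j"
  have cz: "count_list z v = (if v = ?M then 2 else of_bool (1 \<le> v \<and> v \<le> ?M))" for v
    using d unfolding doubled_def by blast
  have le: "\<forall>x\<in>set z. x \<le> ?M"
  proof
    fix x assume "x \<in> set z"
    then have "count_list z x \<noteq> 0" by (simp add: count_list_0_iff)
    then show "x \<le> ?M" using cz[of x] by (auto split: if_splits)
  qed
  obtain la where la: "semistandard la (filter (\<lambda>x. x \<noteq> ?M) z)" "cells la \<subseteq> cells mu"
    "cells mu - cells la = {c \<in> cells mu. ?v (fst c) (snd c) = ?M}"
    "z = word_of_rows (padded_rows la (filter (\<lambda>x. x \<noteq> ?M) z) mu ?M)"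
    by (rule semistandard_remove_max[OF ss le])
  define w where "w = filter (\<lambda>x. x \<noteq> ?M) z"
  have cw: "count_list w v = of_bool (1 \<le> v \<and> v \<le> m)" for v
  proof (cases "v = ?M")
    case False
    then show ?thesis using count_list_filter[of "\<lambda>x. x \<noteq> ?M" v z] cz[of v] by (auto simp: w_def)
  qed (simp add: w_def count_list_0_iff)
  have "length (filter (\<lambda>x. x = ?M) z) = 2" using cz[of ?M] by (simp add: count_list_conv_length_filter)
  then have lw: "length w = m"
    using sum_length_filter_compl[of "\<lambda>x. x \<noteq> ?M" z] d by (simp add: w_def doubled_def)
  have "set w = {1..m}" using distinct_count_list_of_bool(2)[OF cw] by (simp add: set_eq_iff)
  then have st: "standard m (la, w)"
    using distinct_count_list_of_bool(1)[OF cw] lw semistandardD(2)[OF la(1)] la(1)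
    by (simp add: standard_iff_semistandard w_def)
  note diff = la(3)
  have "card (cells mu - cells la) = 2"
    using card_cells_filter[OF old(2), of "\<lambda>x. x = ?M"] cz[of ?M]
    by (simp add: diff count_list_conv_length_filter)
  moreover have "snd c \<noteq> snd c'" if "c \<in> cells mu - cells la" "c' \<in> cells mu - cells la" "c \<noteq> c'" for c c'
  proof
    assume col: "snd c = snd c'"
    obtain i j where ci: "c = (i, j)" by (cases c)
    obtain i' j' where ci': "c' = (i', j')" by (cases c')
    have M: "?v i j = ?M" "?v i' j' = ?M" "(i, j) \<in> cells mu" "(i', j') \<in> cells mu"
      using that(1,2) ci ci' unfolding diff by simp_all
    have "j' = j" "i \<noteq> i'" using col ci ci' that(3) by auto
    then show False
      using old(4)[of i i' j] old(4)[of i' i j] M by (cases "i < i'") (auto simp: cells_def)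
  qed
  ultimately have "horizontal_2_strip la mu" using old(1) la(2) by (simp add: horizontal_2_strip_def)
  then have "(mu, z) \<in> A_set (la, w)" using la(4) lw by (auto simp: A_set_eq w_def)
  then show ?thesis using st by blast
qed

definition order12 :: "nat list \<Rightarrow> nat list" where
  "order12 w = filter (\<lambda>v. v = 1 \<or> v = 2) w"

definition unshift :: "nat \<Rightarrow> nat" where
  "unshift v = (if v = 1 then 1 else v - 1)"

lemma zero_first_one_append: "1 \<notin> set u \<Longrightarrow> zero_first_one (u @ 1 # v) = u @ 0 # v"
  by (induction u) auto

lemma count_list_map_Suc: "count_list (map Suc xs) c = (if c = 0 then 0 else count_list xs (c - 1))"
  by (induction xs) auto

lemma filter_eq_replicate_count: "filter (\<lambda>x. x = c) v = replicate (count_list v c) c"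
  by (induction v) auto

lemma doubled_1_decomp:
  assumes "doubled 1 N x"
  obtains u v where "x = u @ 1 # v" "1 \<notin> set u" "0 \<notin> set x"
    "r1101 x = u @ 0 # v" "tau1 (r1101 x) = map Suc u @ 1 # map Suc v"
proof -
  have c: "count_list x 1 = 2" "count_list x 0 = 0" using assms by (simp_all add: doubled_def)
  then have "1 \<in> set x" by (metis count_notin zero_neq_numeral)
  then obtain u v where x: "x = u @ 1 # v" "1 \<notin> set u" by (metis split_list_first)
  moreover have "0 \<notin> set x" using c by (simp add: count_list_0_iff)
  moreover have "r1101 x = u @ 0 # v" using c x zero_first_one_append by (simp add: r1101_def)
  ultimately show ?thesis using that by (simp add: tau1_def)
qed

lemma tau1_r1101_standard:
  assumes ss: "semistandard la x" and d: "doubled 1 (Suc m) x"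
  shows "standard (Suc (Suc m)) (la, tau1 (r1101 x)) \<and> order12 (tau1 (r1101 x)) = [1, 2]"
  using d
proof (rule doubled_1_decomp)
  fix u v assume x: "x = u @ 1 # v" "1 \<notin> set u" "0 \<notin> set x"
    and z: "tau1 (r1101 x) = map Suc u @ 1 # map Suc v"
  note old = semistandardD[OF ss]
  let ?z = "tau1 (r1101 x)" and ?p = "length u"
  have cx: "count_list x c = (if c = 1 then 2 else of_bool (1 \<le> c \<and> c \<le> Suc m))" for c
    using d by (simp add: doubled_def)
  have cy: "count_list (u @ 0 # v) c = of_bool (c \<le> Suc m)" for c
    using cx[of c] x(3) unfolding x(1) by (cases "c = 1") (auto simp: count_list_0_iff)
  have "?z = map Suc (u @ 0 # v)" using z by simp
  then have cz: "count_list ?z c = of_bool (1 \<le> c \<and> c \<le> Suc (Suc m))" for c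
    using count_list_map_Suc[of "u @ 0 # v" c] cy[of "c - 1"] by auto
  have lz: "length ?z = length x" using z x(1) by simp
  have zq: "?z ! q = (if q = ?p then 1 else Suc (x ! q))" if "q < length x" for q
    using that z x(1) by (auto simp: nth_append nth_Cons')
  have pos: "1 \<le> x ! q" if "q < length x" for q using x(3) that by (metis less_one not_le nth_mem)
  have before: "x ! q \<noteq> 1" if "q < ?p" for q
  proof -
    have "x ! q = u ! q" "u ! q \<in> set u" using that x(1) by (simp_all add: nth_append)
    then show ?thesis using x(2) by force
  qed
  have at: "x ! ?p = 1" using x by simp
  have "semistandard la ?z"
  proof (rule semistandardI[OF old(1)])
    show "length ?z = sum_list la" using lz old(2) by simp
  next
    fix i j j' assume h: "i < length la" "j < j'" "j' < la ! i"
    let ?q = "read_pos la i j" and ?q' = "read_pos la i j'"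
    have "?q < ?q'" "?q' < length x" using h read_pos_less_sum[of i la j'] old(2) by (auto simp: read_pos_def)
    then show "?z ! ?q \<le> ?z ! ?q'"
      using zq old(3)[OF h] before[of ?q] at pos[of ?q] by auto
  next
    fix i i' j assume h: "i < i'" "i' < length la" "j < la ! i'"
    let ?q = "read_pos la i j" and ?q' = "read_pos la i' j"
    have "j < la ! i" using is_partition_antimono[OF old(1), of i i'] h by simp
    then have "?q < length x" "?q' < length x"
      using h read_pos_less_sum[of i la j] read_pos_less_sum[of i' la j] old(2) by auto
    then show "?z ! ?q < ?z ! ?q'"
      using zq old(4)[OF h] at pos[of ?q] by auto
  qed
  then have "standard (Suc (Suc m)) (la, ?z)"
    using distinct_count_list_of_bool[OF cz] semistandardD(2)[of la ?z] lz d
    by (auto simp: standard_iff_semistandard set_eq_iff doubled_def)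
  moreover have "order12 ?z = [1, 2]"
  proof -
    have "0 \<notin> set u" "1 \<notin> set u" using x by auto
    then have "filter (\<lambda>c. c = 1 \<or> c = 2) (map Suc u) = []" by (induction u) auto
    moreover have "0 \<notin> set v" using x by auto
    then have "filter (\<lambda>c. c = 1 \<or> c = 2) (map Suc v) = map Suc (filter (\<lambda>c. c = 1) v)"
      by (induction v) auto
    moreover have "filter (\<lambda>c. c = 1) v = [1]"
      using filter_eq_replicate_count[of 1 v] cx[of 1] x(1,2) by simp
    ultimately show ?thesis using z by (simp add: order12_def)
  qed
  ultimately show ?thesis by simp
qed

lemma unshift_tau1_r1101: "doubled 1 N x \<Longrightarrow> map unshift (tau1 (r1101 x)) = x"
proof (rule doubled_1_decomp)
  fix u v assume "x = u @ 1 # v" "0 \<notin> set x" "tau1 (r1101 x) = map Suc u @ 1 # map Suc v"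
  moreover have "map unshift (map Suc l) = l" if "0 \<notin> set l" for l
    using that by (induction l) (auto simp: unshift_def)
  ultimately show ?thesis by (simp add: unshift_def)
qed

lemma count_list_map_unshift:
  "count_list (map unshift w) v =
     (if v = 1 then count_list w 1 + count_list w 2 else if v = 0 then count_list w 0
      else count_list w (Suc v))"
  by (induction w) (auto simp: unshift_def)

lemma semistandard_map:
  assumes ss: "semistandard la w" and "mono f"
    and col: "\<And>i i' j. i < i' \<Longrightarrow> i' < length la \<Longrightarrow> j < la ! i' \<Longrightarrow>
      f (w ! read_pos la i j) < f (w ! read_pos la i' j)"
  shows "semistandard la (map f w)"
proof -
  note old = semistandardD[OF ss]
  have "read_pos la i j < length w" if "i < length la" "j < la ! i" for i j
    using read_pos_less_sum[OF that] old(2) by simp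
  then show ?thesis
    using old \<open>mono f\<close> col is_partition_antimono[OF old(1)]
    by (intro semistandardI) (auto simp: monoD order.strict_trans2)
qed

lemma unshift_semistandard:
  assumes st: "standard (Suc (Suc m)) (la, w)" and o: "order12 w = [1, 2]"
  shows "semistandard la (map unshift w) \<and> doubled 1 (Suc m) (map unshift w) \<and>
    tau1 (r1101 (map unshift w)) = w"
proof -
  note T = standardD[OF st]
  let ?Q = "\<lambda>v :: nat. v = 1 \<or> v = 2"
  obtain a v1 where 1: "w = a @ 1 # v1" "\<forall>u\<in>set a. \<not> ?Q u" "filter ?Q v1 = [2]"
    using o filter_eq_Cons_iff[of ?Q w 1 "[2]"] by (auto simp: order12_def)
  obtain b c where 2: "v1 = b @ 2 # c" "\<forall>u\<in>set b. \<not> ?Q u" "filter ?Q c = []"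
    using 1(3) filter_eq_Cons_iff[of ?Q v1 2 "[]"] by auto
  have pos: "1 \<le> u" if "u \<in> set w" for u using T(6) that by auto
  have cw: "count_list w v = of_bool (1 \<le> v \<and> v \<le> Suc (Suc m))" for v
    by (rule standard_count_list[OF st])
  have d: "doubled 1 (Suc m) (map unshift w)"
    using T(4) cw by (auto simp: doubled_def count_list_map_unshift)
  have "Suc (unshift u) = u" if "u \<in> set w" "\<not> ?Q u" for u
    using that pos[OF that(1)] by (auto simp: unshift_def)
  then have id: "map (Suc \<circ> unshift) l = l" if "set l \<subseteq> set w" "\<forall>u\<in>set l. \<not> ?Q u" for l
    using that by (induction l) auto
  have a1: "1 \<notin> set (map unshift a)" using 1(1,2) pos by (auto simp: unshift_def)
  have "count_list (map unshift w) 1 = 2" using d by (simp add: doubled_def)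
  moreover have "map unshift w = map unshift a @ 1 # map unshift b @ 1 # map unshift c"
    using 1(1) 2(1) by (simp add: unshift_def)
  ultimately have "r1101 (map unshift w) = map unshift a @ 0 # map unshift b @ 1 # map unshift c"
    using zero_first_one_append[OF a1] by (simp add: r1101_def)
  moreover have "map (Suc \<circ> unshift) a = a" "map (Suc \<circ> unshift) b = b" "map (Suc \<circ> unshift) c = c"
    using id 1 2 by (auto simp: filter_empty_conv)
  ultimately have t: "tau1 (r1101 (map unshift w)) = w" using 1(1) 2(1) by (simp add: tau1_def)
  have "semistandard la (map unshift w)"
  proof (rule semistandard_map[OF T(7)])
    show "mono unshift" by (auto simp: mono_def unshift_def)
    fix i i' j assume h: "i < i'" "i' < length la" "j < la ! i'"
    let ?q = "read_pos la i j" and ?q' = "read_pos la i' j"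
    have "j < la ! i" using is_partition_antimono[OF T(1), of i i'] h by simp
    then have ql: "?q < length w" "?q' < length w" "?q' < ?q"
      using h read_pos_less_sum[of i la j] read_pos_less_sum[of i' la j] T(2) read_pos_less_iff
      by auto
    have lt: "w ! ?q < w ! ?q'" using semistandardD(4)[OF T(7) h] .
    let ?p1 = "length a" and ?p2 = "Suc (length a + length b)"
    have p: "w ! ?p1 = 1" "w ! ?p2 = 2" "?p1 < length w" "?p2 < length w"
      using 1(1) 2(1) by (simp_all add: nth_append)
    have "\<not> (w ! ?q = 1 \<and> w ! ?q' = 2)"
    proof
      assume "w ! ?q = 1 \<and> w ! ?q' = 2"
      then have "?q = ?p1" "?q' = ?p2"
        using nth_eq_iff_index_eq[OF T(5)] ql(1,2) p by metis+
      then show False using ql(3) by simp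
    qed
    then show "unshift (w ! ?q) < unshift (w ! ?q')" using lt pos[of "w ! ?q"] ql by (auto simp: unshift_def)
  qed
  then show ?thesis using d t by simp
qed

definition B0_step :: "nat \<Rightarrow> tab \<Rightarrow> tab" where
  "B0_step m s = (fst s, tau1 (r1101 (sigma_chain m (snd s))))"

definition B0_preimage_word :: "nat \<Rightarrow> nat list \<Rightarrow> nat list" where
  "B0_preimage_word m w = filter (\<lambda>v. v \<noteq> Suc m) (fold sigma [1..<Suc m] (map unshift w))"

lemma B0_step_standard:
  assumes st: "standard m t" and s: "s \<in> A_set t"
  shows "standard (Suc (Suc m)) (B0_step m s) \<and> order12 (snd (B0_step m s)) = [1, 2] \<and>
    B0_preimage_word m (snd (B0_step m s)) = snd t"
proof -
  obtain la w where t: "t = (la, w)" by (cases t)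
  have a: "semistandard (fst s) (snd s)" "doubled (Suc m) (Suc m) (snd s)"
    "filter (\<lambda>v. v \<noteq> Suc m) (snd s) = w"
    using A_set_semistandard[of m la w s] st s t by auto
  let ?x = "sigma_chain m (snd s)"
  have x: "semistandard (fst s) ?x" "doubled 1 (Suc m) ?x" using sigma_chain_semistandard[OF a(1,2)] by auto
  have "B0_preimage_word m (tau1 (r1101 ?x)) = w"
    using unshift_tau1_r1101[OF x(2)] fold_sigma_sigma_chain[OF a(2)] a(3) by (simp add: B0_preimage_word_def)
  then show ?thesis using tau1_r1101_standard[OF x] t by (simp add: B0_step_def)
qed

lemma B0_step_surj:
  assumes st: "standard (Suc (Suc m)) T'" and o: "order12 (snd T') = [1, 2]"
  shows "\<exists>t s. standard m t \<and> s \<in> A_set t \<and> T' = B0_step m s"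
proof -
  obtain la w' where T': "T' = (la, w')" by (cases T')
  let ?x = "map unshift w'"
  have x: "semistandard la ?x" "doubled 1 (Suc m) ?x" "tau1 (r1101 ?x) = w'"
    using unshift_semistandard[of m la w'] st o T' by auto
  let ?z = "fold sigma [1..<Suc m] ?x"
  obtain t where "standard m t" "(la, ?z) \<in> A_set t"
    using A_set_of_semistandard fold_sigma_semistandard[OF x(1,2)] by blast
  moreover have "T' = B0_step m (la, ?z)"
    using sigma_chain_fold_sigma[OF x(2)] x(3) T' by (simp add: B0_step_def)
  ultimately show ?thesis by blast
qed

definition support :: "comb \<Rightarrow> tab set" where
  "support c = {t. c t \<noteq> 0}"

definition nonneg_comb :: "comb \<Rightarrow> bool" where
  "nonneg_comb c \<longleftrightarrow> finite (support c) \<and> (\<forall>t. 0 \<le> c t)"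

lemma support_lin:
  assumes c: "nonneg_comb c" and F: "\<And>t. nonneg_comb (F t)"
  shows "support (lin F c) = (\<Union>t\<in>support c. support (F t))"
proof -
  have "0 \<le> c t" "0 \<le> F t t'" for t t' using c F[of t] unfolding nonneg_comb_def by blast+
  then have "0 \<le> c t * F t t'" for t t' by simp
  then have "(\<Sum>t\<in>support c. c t * F t t') = 0 \<longleftrightarrow> (\<forall>t\<in>support c. c t * F t t' = 0)" for t'
    using c by (intro sum_nonneg_eq_0_iff) (simp_all add: nonneg_comb_def)
  then show ?thesis by (auto simp: support_def lin_def)
qed

lemma nonneg_comb_lin:
  assumes "nonneg_comb c" "\<And>t. nonneg_comb (F t)"
  shows "nonneg_comb (lin F c)"
  using assms support_lin[OF assms]
  by (auto simp: nonneg_comb_def lin_def intro!: sum_nonneg)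

lemma length_le_sum_list_pos: "\<forall>x\<in>set xs. 0 < x \<Longrightarrow> length xs \<le> sum_list (xs :: nat list)"
  by (induction xs) auto

lemma finite_partitions: "finite {mu. is_partition mu \<and> sum_list mu = K}"
proof (rule finite_subset)
  show "{mu. is_partition mu \<and> sum_list mu = K} \<subseteq> {xs. set xs \<subseteq> {0..K} \<and> length xs \<le> K}"
    using length_le_sum_list_pos member_le_sum_list by (fastforce simp: is_partition_def)
qed (rule finite_lists_length_le, simp)

lemma finite_A_set: "finite (A_set (la, w))"
proof -
  have "{mu. horizontal_2_strip la mu} \<subseteq> {mu. is_partition mu \<and> sum_list mu = sum_list la + 2}"
    using card_cells_diff card_mono[OF finite_cells] card_cells
    by (fastforce simp: horizontal_2_strip_def)
  then have "finite {mu. horizontal_2_strip la mu}" using finite_partitions finite_subset by blast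
  then show ?thesis unfolding A_set_eq by simp
qed

lemma finite_standard: "finite {t. standard m t}"
proof (rule finite_subset)
  show "{t. standard m t} \<subseteq>
    {mu. is_partition mu \<and> sum_list mu = m} \<times> {xs. set xs \<subseteq> {0..m} \<and> length xs \<le> m}"
  proof
    fix t assume "t \<in> {t. standard m t}"
    moreover obtain la w where "t = (la, w)" by (cases t)
    ultimately show "t \<in> {mu. is_partition mu \<and> sum_list mu = m} \<times> {xs. set xs \<subseteq> {0..m} \<and> length xs \<le> m}"
      using standardD[of m la w] by auto
  qed
qed (use finite_partitions in \<open>auto intro: finite_lists_length_le\<close>)

lemma support_B0: "support (B0 t) = B0_step (length (snd t)) ` A_set t"
proof -
  have fin: "finite (A_set t)" using finite_A_set[of "fst t" "snd t"] by simp
  have eq: "B0 t t' = (\<Sum>s\<in>A_set t. of_bool (B0_step (length (snd t)) s = t'))" for t'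
    unfolding B0_def B0_step_def ..
  have zero: "(\<Sum>s\<in>A_set t. of_bool (B0_step (length (snd t)) s = t') :: int) = 0 \<longleftrightarrow>
      (\<forall>s\<in>A_set t. B0_step (length (snd t)) s \<noteq> t')" for t'
    by (subst sum_nonneg_eq_0_iff[OF fin]) auto
  show ?thesis
  proof (rule set_eqI)
    fix t'
    show "t' \<in> support (B0 t) \<longleftrightarrow> t' \<in> B0_step (length (snd t)) ` A_set t"
      using eq[of t'] zero[of t'] by (auto simp: support_def image_iff)
  qed
qed

lemma nonneg_comb_B0: "nonneg_comb (B0 t)"
proof -
  have "finite (support (B0 t))"
    unfolding support_B0 using finite_A_set[of "fst t" "snd t"] by simp
  then show ?thesis by (simp add: nonneg_comb_def B0_def sum_nonneg)
qed

lemma support_delta: "support (delta s) = {s}" and nonneg_comb_delta: "nonneg_comb (delta s)"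
  by (auto simp: support_def nonneg_comb_def delta_def)

lemma support_B1: "support (B1 t) = transpose_tab ` support (B0 (transpose_tab t))"
  unfolding B1_def
  by (simp add: support_lin nonneg_comb_B0 nonneg_comb_delta support_delta UNION_singleton_eq_range)

lemma nonneg_comb_B1: "nonneg_comb (B1 t)"
  unfolding B1_def by (simp add: nonneg_comb_lin nonneg_comb_B0 nonneg_comb_delta)

lemma support_Sigma_std: "support (Sigma_std m) = {t. standard m t}"
  and nonneg_comb_Sigma_std: "nonneg_comb (Sigma_std m)"
  using finite_standard by (auto simp: support_def nonneg_comb_def Sigma_std_def)

lemma UN_support_B0_standard:
  "(\<Union>t\<in>{t. standard m t \<and> P (snd t)}. support (B0 t)) =
    {T'. standard (Suc (Suc m)) T' \<and> order12 (snd T') = [1, 2] \<and> P (B0_preimage_word m (snd T'))}"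
proof -
  have len: "length (snd t) = m" if "standard m t" for t
    using standardD(4)[of m "fst t" "snd t"] that by simp
  have "T' \<in> (\<Union>t\<in>{t. standard m t \<and> P (snd t)}. support (B0 t)) \<longleftrightarrow>
      (\<exists>t. standard m t \<and> P (snd t) \<and> T' \<in> B0_step (length (snd t)) ` A_set t)" for T'
    unfolding support_B0 by blast
  also have "\<dots> T' \<longleftrightarrow> (\<exists>t s. standard m t \<and> P (snd t) \<and> s \<in> A_set t \<and> T' = B0_step m s)" for T'
  proof
    assume "\<exists>t. standard m t \<and> P (snd t) \<and> T' \<in> B0_step (length (snd t)) ` A_set t"
    then obtain t s where "standard m t" "P (snd t)" "s \<in> A_set t" "T' = B0_step (length (snd t)) s"
      by blast
    then show "\<exists>t s. standard m t \<and> P (snd t) \<and> s \<in> A_set t \<and> T' = B0_step m s" using len by blast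
  next
    assume "\<exists>t s. standard m t \<and> P (snd t) \<and> s \<in> A_set t \<and> T' = B0_step m s"
    then obtain t s where "standard m t" "P (snd t)" "s \<in> A_set t" "T' = B0_step m s" by blast
    then show "\<exists>t. standard m t \<and> P (snd t) \<and> T' \<in> B0_step (length (snd t)) ` A_set t"
      using len by blast
  qed
  also have "\<dots> T' \<longleftrightarrow> standard (Suc (Suc m)) T' \<and> order12 (snd T') = [1, 2] \<and>
      P (B0_preimage_word m (snd T'))" for T'
  proof
    assume "\<exists>t s. standard m t \<and> P (snd t) \<and> s \<in> A_set t \<and> T' = B0_step m s"
    then obtain t s where "standard m t" "P (snd t)" "s \<in> A_set t" "T' = B0_step m s" by blast
    then show "standard (Suc (Suc m)) T' \<and> order12 (snd T') = [1, 2] \<and> P (B0_preimage_word m (snd T'))"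
      using B0_step_standard by simp
  next
    assume h: "standard (Suc (Suc m)) T' \<and> order12 (snd T') = [1, 2] \<and> P (B0_preimage_word m (snd T'))"
    then obtain t s where ts: "standard m t" "s \<in> A_set t" "T' = B0_step m s"
      using B0_step_surj by blast
    then have "B0_preimage_word m (snd T') = snd t" using B0_step_standard by simp
    then show "\<exists>t s. standard m t \<and> P (snd t) \<and> s \<in> A_set t \<and> T' = B0_step m s"
      using ts h by metis
  qed
  finally show ?thesis by blast
qed

lemma foldr_max_less: "j < foldr max la (0 :: nat) \<longleftrightarrow> (\<exists>l\<in>set la. j < l)"
  by (induction la) (auto simp: less_max_iff_disj)

lemma length_conj_part: "length (conj_part la) = foldr max la 0"
  by (simp add: conj_part_def)

lemma nth_conj_part: "j < length (conj_part la) \<Longrightarrow> conj_part la ! j = length (filter (\<lambda>l. j < l) la)"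
  by (simp add: conj_part_def)

lemma less_length_filter_less:
  "is_partition la \<Longrightarrow> i < length (filter (\<lambda>l. j < l) la) \<longleftrightarrow> i < length la \<and> j < la ! i"
proof (induction la arbitrary: i)
  case (Cons l ls)
  have p: "is_partition ls" "\<forall>x\<in>set ls. x \<le> l" using Cons.prems by (auto simp: is_partition_Cons)
  show ?case
  proof (cases "j < l")
    case False
    then have "filter (\<lambda>l. j < l) ls = []" using p by (force simp: filter_empty_conv)
    moreover have le_l: "ls ! k \<le> l" if "k < length ls" for k using p(2) nth_mem[OF that] by blast
    have "\<not> j < (l # ls) ! i" if "i < length (l # ls)" for i
    proof (cases i)
      case (Suc k)
      then show ?thesis using that le_l[of k] False by simp
    qed (use False in simp)
    ultimately show ?thesis using False by auto
  next
    case True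
    then show ?thesis using Cons.IH[OF p(1)] by (cases i) auto
  qed
qed simp

lemma cells_conj_part:
  assumes "is_partition la"
  shows "(j, i) \<in> cells (conj_part la) \<longleftrightarrow> (i, j) \<in> cells la"
proof
  assume "(j, i) \<in> cells (conj_part la)"
  then have "j < length (conj_part la)" "i < conj_part la ! j" by (auto simp: cells_def)
  then show "(i, j) \<in> cells la"
    using less_length_filter_less[OF assms] nth_conj_part by (auto simp: cells_def)
next
  assume "(i, j) \<in> cells la"
  then have a: "i < length la" "j < la ! i" by (auto simp: cells_def)
  then have "j < length (conj_part la)" using length_conj_part foldr_max_less nth_mem by metis
  then show "(j, i) \<in> cells (conj_part la)"
    using a less_length_filter_less[OF assms] nth_conj_part by (auto simp: cells_def)
qed

lemma is_partition_conj_part: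
  assumes p: "is_partition la" shows "is_partition (conj_part la)"
  unfolding is_partition_def
proof
  show "sorted_wrt (\<lambda>x y. y \<le> x) (conj_part la)"
  proof (rule sorted_wrt_iff_nth_less[THEN iffD2], intro allI impI)
    fix j j' assume "j < j'" "j' < length (conj_part la)"
    moreover have "length (filter (\<lambda>l. j' < l) la) \<le> length (filter (\<lambda>l. j < l) la)"
      using \<open>j < j'\<close> by (induction la) auto
    ultimately show "conj_part la ! j' \<le> conj_part la ! j" using nth_conj_part by simp
  qed
  show "\<forall>x\<in>set (conj_part la). 0 < x"
  proof
    fix x assume "x \<in> set (conj_part la)"
    then obtain j where j: "j < length (conj_part la)" "x = conj_part la ! j"
      by (auto simp: in_set_conv_nth)
    then obtain l where "l \<in> set la" "j < l" by (auto simp: length_conj_part foldr_max_less)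
    then show "0 < x" using j nth_conj_part by (auto simp: filter_empty_conv length_greater_0_conv)
  qed
qed

lemma partition_eq_if_cells_eq:
  assumes "is_partition a" "is_partition b" "cells a = cells b"
  shows "a = b"
proof -
  have "i < length a \<longleftrightarrow> (i, 0) \<in> cells a" "i < length b \<longleftrightarrow> (i, 0) \<in> cells b" for i
    using is_partition_pos[OF assms(1)] is_partition_pos[OF assms(2)] by (auto simp: cells_def)
  then have l: "length a = length b" using assms(3) by (metis linorder_neqE_nat less_irrefl)
  show ?thesis
  proof (rule nth_equalityI[OF l])
    fix i assume "i < length a"
    then have "j < a ! i \<longleftrightarrow> j < b ! i" for j using assms(3) l by (auto simp: cells_def set_eq_iff)
    then show "a ! i = b ! i" by (metis linorder_neqE_nat less_irrefl)
  qed
qed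

lemma conj_part_conj_part: "is_partition la \<Longrightarrow> conj_part (conj_part la) = la"
  by (rule partition_eq_if_cells_eq)
    (auto simp: is_partition_conj_part cells_conj_part set_eq_iff)

lemma mem_swap_image: "c \<in> prod.swap ` A \<longleftrightarrow> prod.swap c \<in> A"
  by (metis image_iff swap_swap)

lemma swap_image_cells_conj_part: "is_partition la \<Longrightarrow> prod.swap ` cells (conj_part la) = cells la"
  using cells_conj_part[of la] by (auto simp: mem_swap_image)

lemma sum_list_conj_part:
  assumes p: "is_partition la" shows "sum_list (conj_part la) = sum_list la"
proof -
  have "card (prod.swap ` cells (conj_part la)) = card (cells (conj_part la))"
    by (simp add: card_image)
  then have "card (cells (conj_part la)) = card (cells la)" using swap_image_cells_conj_part[OF p] by simp
  then show ?thesis by (simp add: card_cells)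
qed

lemma transpose_tab_read_pos:
  assumes p: "is_partition la" and lw: "length w = sum_list la"
  shows "fst (transpose_tab (la, w)) = conj_part la"
    "length (snd (transpose_tab (la, w))) = sum_list (conj_part la)"
    "(j, i) \<in> cells la \<Longrightarrow>
      snd (transpose_tab (la, w)) ! read_pos (conj_part la) i j = w ! read_pos la j i"
proof -
  let ?mu = "conj_part la"
  let ?R = "map (\<lambda>i. map (\<lambda>j. entry (la, w) j i) [0..<?mu ! i]) [0..<length ?mu]"
  have tt: "transpose_tab (la, w) = (?mu, word_of_rows ?R)" by (simp add: transpose_tab_def Let_def)
  have ml: "map length ?R = ?mu" by (rule nth_equalityI) auto
  then have lz: "length (word_of_rows ?R) = sum_list ?mu" by (simp add: length_word_of_rows)
  then show "fst (transpose_tab (la, w)) = ?mu" "length (snd (transpose_tab (la, w))) = sum_list ?mu"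
    using tt by simp_all
  assume c: "(j, i) \<in> cells la"
  then have h: "i < length ?mu" "j < ?mu ! i" using cells_conj_part[OF p] by (auto simp: cells_def)
  then have "word_of_rows ?R ! read_pos ?mu i j = entry (la, w) j i"
    using rows_nth_nth[OF lz h] rows_word_of_rows[OF ml] by simp
  then show "snd (transpose_tab (la, w)) ! read_pos ?mu i j = w ! read_pos la j i"
    using entry_read_pos[of "(la, w)" j i] lw c tt by (simp add: cells_def)
qed

lemma set_eq_image_cells:
  assumes "length w = sum_list la"
  shows "set w = (\<lambda>(i, j). w ! read_pos la i j) ` cells la"
proof -
  have "set w = (!) w ` {..<sum_list la}" using assms by (auto simp: in_set_conv_nth image_iff)
  also have "{..<sum_list la} = (\<lambda>(i, j). read_pos la i j) ` cells la"
    using bij_betw_imp_surj_on[OF bij_betw_read_pos_cells] by simp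
  finally show ?thesis by (simp add: image_image case_prod_beta)
qed

lemma transpose_standard:
  assumes st: "standard n t"
  shows "standard n (transpose_tab t)"
proof -
  obtain la w where t: "t = (la, w)" by (cases t)
  note T = standardD[OF st[unfolded t]]
  let ?mu = "conj_part la"
  define w' where "w' = snd (transpose_tab (la, w))"
  note tr = transpose_tab_read_pos[OF T(1,2), folded w'_def]
  have tt: "transpose_tab (la, w) = (?mu, w')" using tr(1) by (simp add: w'_def prod_eq_iff)
  note lw' = tr(2) and ent = tr(3)
  have pm: "is_partition ?mu" by (rule is_partition_conj_part[OF T(1)])
  have cc: "(i, j) \<in> cells ?mu \<longleftrightarrow> (j, i) \<in> cells la" for i j by (rule cells_conj_part[OF T(1)])
  have "set w' = (\<lambda>(i, j). w' ! read_pos ?mu i j) ` cells ?mu" by (rule set_eq_image_cells[OF lw'])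
  also have "\<dots> = (\<lambda>(i, j). w ! read_pos la i j) ` prod.swap ` cells ?mu"
    using ent cc by (force simp: image_iff)
  also have "prod.swap ` cells ?mu = cells la" by (rule swap_image_cells_conj_part[OF T(1)])
  finally have sw: "set w' = set w" using set_eq_image_cells[OF T(2)] by simp
  have "length w' = length w" using lw' T(2) sum_list_conj_part[OF T(1)] by simp
  then have dw: "distinct w'" using T(5) sw by (metis card_distinct distinct_card)
  have wne: "w ! read_pos la i j \<noteq> w ! read_pos la i j'" if "(i, j) \<in> cells la" "(i, j') \<in> cells la" "j \<noteq> j'"
    for i j j'
    using that read_pos_inj[of i la j i j'] read_pos_less_sum[of i la] T(2,5)
    by (auto simp: cells_def nth_eq_iff_index_eq)
  have "semistandard ?mu w'"
  proof (rule semistandardI[OF pm lw'])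
    fix i j j' assume h: "i < length ?mu" "j < j'" "j' < ?mu ! i"
    then have c': "(i, j') \<in> cells ?mu" by (simp add: cells_def)
    then have "(i, j) \<in> cells ?mu" using cells_partition_down[OF pm, of i j' i j] h(2) by simp
    then have "(j, i) \<in> cells la" "(j', i) \<in> cells la" using cc c' by auto
    then show "w' ! read_pos ?mu i j \<le> w' ! read_pos ?mu i j'"
      using ent semistandardD(4)[OF T(7), of j j' i] h(2) by (simp add: cells_def)
  next
    fix i i' j assume h: "i < i'" "i' < length ?mu" "j < ?mu ! i'"
    then have c': "(i', j) \<in> cells ?mu" by (simp add: cells_def)
    then have "(i, j) \<in> cells ?mu" using cells_partition_down[OF pm, of i' j i j] h(1) by simp
    then have c: "(j, i) \<in> cells la" "(j, i') \<in> cells la" using cc c' by auto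
    then show "w' ! read_pos ?mu i j < w' ! read_pos ?mu i' j"
      using ent semistandardD(3)[OF T(7), of j i i'] wne[OF c] h(1)
      by (simp add: cells_def order_less_le)
  qed
  then show ?thesis
    using tt t T sw dw sum_list_conj_part[OF T(1)] by (simp add: standard_iff_semistandard)
qed

lemma transpose_transpose:
  assumes st: "standard n t" shows "transpose_tab (transpose_tab t) = t"
proof -
  obtain la w where t: "t = (la, w)" by (cases t)
  note T = standardD[OF st[unfolded t]]
  let ?mu = "conj_part la"
  define w' where "w' = snd (transpose_tab (la, w))"
  note tr = transpose_tab_read_pos[OF T(1,2), folded w'_def]
  have tt: "transpose_tab (la, w) = (?mu, w')" using tr(1) by (simp add: w'_def prod_eq_iff)
  note lw' = tr(2) and e1 = tr(3)
  have pm: "is_partition ?mu" by (rule is_partition_conj_part[OF T(1)])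
  define w'' where "w'' = snd (transpose_tab (?mu, w'))"
  note tr2 = transpose_tab_read_pos[OF pm lw', folded w''_def, unfolded conj_part_conj_part[OF T(1)]]
  have tt2: "transpose_tab (?mu, w') = (la, w'')" using tr2(1) by (simp add: w''_def prod_eq_iff)
  note lw'' = tr2(2) and e2 = tr2(3)
  have "w'' = w"
  proof (rule nth_equalityI)
    show "length w'' = length w" using lw'' T(2) by simp
    fix q assume "q < length w''"
    then obtain i j where "(i, j) \<in> cells la" "q = read_pos la i j"
      using read_pos_surj[of q la] lw'' by (auto simp: cells_def)
    then show "w'' ! q = w ! q" using e1 e2 cells_conj_part[OF T(1)] by simp
  qed
  then show ?thesis using t tt tt2 by simp
qed

definition cell_of :: "tab \<Rightarrow> nat \<Rightarrow> nat \<times> nat" where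
  "cell_of t v = (THE c. c \<in> cells (fst t) \<and> snd t ! read_pos (fst t) (fst c) (snd c) = v)"

lemma standard_cell_of:
  assumes st: "standard n (la, w)" and v: "1 \<le> v" "v \<le> n"
  shows "cell_of (la, w) v \<in> cells la"
    "w ! read_pos la (fst (cell_of (la, w) v)) (snd (cell_of (la, w) v)) = v"
    "c \<in> cells la \<Longrightarrow> w ! read_pos la (fst c) (snd c) = v \<Longrightarrow> c = cell_of (la, w) v"
proof -
  note T = standardD[OF st]
  let ?P = "\<lambda>c. c \<in> cells la \<and> w ! read_pos la (fst c) (snd c) = v"
  have "v \<in> set w" using T(6) v by simp
  then obtain q where q: "q < length w" "w ! q = v" by (auto simp: in_set_conv_nth)
  then obtain i j where "(i, j) \<in> cells la" "q = read_pos la i j"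
    using read_pos_surj[of q la] T(2) by (auto simp: cells_def)
  then have ex: "?P (i, j)" using q by simp
  have uniq: "c = d" if "?P c" "?P d" for c d
  proof -
    have "read_pos la (fst c) (snd c) < length w" "read_pos la (fst d) (snd d) < length w"
      using that read_pos_less_sum T(2) by (auto simp: cells_def)
    moreover have "w ! read_pos la (fst c) (snd c) = w ! read_pos la (fst d) (snd d)"
      using that by simp
    ultimately have "read_pos la (fst c) (snd c) = read_pos la (fst d) (snd d)"
      using nth_eq_iff_index_eq[OF T(5)] by blast
    then show ?thesis
      using read_pos_inj[of "fst c" la "snd c" "fst d" "snd d"] that by (auto simp: cells_def prod_eq_iff)
  qed
  have "?P (cell_of (la, w) v)"
    unfolding cell_of_def fst_conv snd_conv by (rule theI[of ?P "(i, j)", OF ex]) (use uniq ex in blast)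
  then show "cell_of (la, w) v \<in> cells la"
    "w ! read_pos la (fst (cell_of (la, w) v)) (snd (cell_of (la, w) v)) = v" by simp_all
  show "c \<in> cells la \<Longrightarrow> w ! read_pos la (fst c) (snd c) = v \<Longrightarrow> c = cell_of (la, w) v"
    using uniq \<open>?P (cell_of (la, w) v)\<close> by blast
qed

lemma standard_value_bounds:
  assumes "standard n (la, w)" "(i, j) \<in> cells la"
  shows "1 \<le> w ! read_pos la i j" "w ! read_pos la i j \<le> n"
proof -
  have "read_pos la i j < length w"
    using assms read_pos_less_sum standardD(2)[OF assms(1)] by (auto simp: cells_def)
  then have "w ! read_pos la i j \<in> {1..n}" using standardD(6)[OF assms(1)] nth_mem by blast
  then show "1 \<le> w ! read_pos la i j" "w ! read_pos la i j \<le> n" by auto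
qed

definition grows :: "(nat \<times> nat) list \<Rightarrow> nat \<times> nat \<Rightarrow> bool" where
  "grows cs c \<longleftrightarrow> c \<notin> set cs \<and> (0 < fst c \<longrightarrow> (fst c - 1, snd c) \<in> set cs) \<and>
     (0 < snd c \<longrightarrow> (fst c, snd c - 1) \<in> set cs)"

lemma grows_cell_of:
  assumes st: "standard n t" and k: "1 \<le> k" "k \<le> n"
  shows "grows (map (cell_of t) [1..<k]) (cell_of t k)"
proof -
  obtain la w where t: "t = (la, w)" by (cases t)
  note T = standardD[OF st[unfolded t]] and C = standard_cell_of[OF st[unfolded t]]
  obtain r s where rs: "cell_of t k = (r, s)" by (cases "cell_of t k")
  have c: "(r, s) \<in> cells la" "w ! read_pos la r s = k" using C(1,2)[OF k] rs t by auto
  have earlier: "(i, j) \<in> set (map (cell_of t) [1..<k])"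
    if "(i, j) \<in> cells la" "w ! read_pos la i j < k" for i j
    using that C(3)[OF standard_value_bounds(1)[OF st[unfolded t] that(1)], of "(i, j)"]
      standard_value_bounds[OF st[unfolded t] that(1)] k t by force
  have "(r, s) \<notin> set (map (cell_of t) [1..<k])"
  proof
    assume "(r, s) \<in> set (map (cell_of t) [1..<k])"
    then obtain u where u: "1 \<le> u" "u < k" "cell_of t u = (r, s)" by auto
    then have "w ! read_pos la r s = u" using C(2)[of u] k t by simp
    then show False using c(2) u(2) by simp
  qed
  moreover have "(r - 1, s) \<in> set (map (cell_of t) [1..<k])" if "0 < r"
  proof (rule earlier)
    show "(r - 1, s) \<in> cells la" using cells_partition_down[OF T(1) c(1), of "r - 1" s] by simp
    then show "w ! read_pos la (r - 1) s < k"
      using semistandardD(4)[OF T(7), of "r - 1" r s] c that by (simp add: cells_def)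
  qed
  moreover have "(r, s - 1) \<in> set (map (cell_of t) [1..<k])" if "0 < s"
  proof (rule earlier)
    show c': "(r, s - 1) \<in> cells la" using cells_partition_down[OF T(1) c(1), of r "s - 1"] by simp
    have "w ! read_pos la r (s - 1) \<le> k"
      using semistandardD(3)[OF T(7), of r "s - 1" s] c that by (simp add: cells_def)
    moreover have "w ! read_pos la r (s - 1) \<noteq> k" using C(3)[OF k c'] rs t that by auto
    ultimately show "w ! read_pos la r (s - 1) < k" by simp
  qed
  ultimately show ?thesis using rs by (simp add: grows_def)
qed

lemma cell_of_transpose:
  assumes st: "standard n t" and v: "1 \<le> v" "v \<le> n"
  shows "cell_of (transpose_tab t) v = prod.swap (cell_of t v)"
proof -
  obtain la w where t: "t = (la, w)" by (cases t)
  note T = standardD[OF st[unfolded t]]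
  note tr = transpose_tab_read_pos[OF T(1,2)]
  have stt: "standard n (conj_part la, snd (transpose_tab (la, w)))"
    using transpose_standard[OF st] tr(1) t by (metis prod.collapse)
  obtain i j where c: "cell_of (la, w) v = (i, j)" by (cases "cell_of (la, w) v")
  have "(i, j) \<in> cells la" "w ! read_pos la i j = v"
    using standard_cell_of(1,2)[OF st[unfolded t] v] c by auto
  then have "(j, i) = cell_of (conj_part la, snd (transpose_tab (la, w))) v"
    using standard_cell_of(3)[OF stt v, of "(j, i)"] tr(3) cells_conj_part[OF T(1)] by simp
  then show ?thesis using c t tr(1) by (metis prod.collapse swap_simp)
qed

definition reads_before :: "nat \<times> nat \<Rightarrow> nat \<times> nat \<Rightarrow> bool" where
  "reads_before c d \<longleftrightarrow> fst d < fst c \<or> fst c = fst d \<and> snd c < snd d"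

lemma reads_before_iff_read_pos_less:
  "c \<in> cells la \<Longrightarrow> d \<in> cells la \<Longrightarrow>
    reads_before c d \<longleftrightarrow> read_pos la (fst c) (snd c) < read_pos la (fst d) (snd d)"
  by (cases c, cases d) (simp add: reads_before_def read_pos_less_iff cells_def)

lemma filter_eq_map_nth:
  assumes "sorted_wrt (<) qs" "set qs = {q. q < length w \<and> P (w ! q)}"
  shows "filter P w = map ((!) w) qs"
proof -
  have "filter P w = filter P (map ((!) w) [0..<length w])" by (simp add: map_nth)
  also have "\<dots> = map ((!) w) (filter (\<lambda>q. P (w ! q)) [0..<length w])"
    by (simp add: filter_map comp_def)
  also have "filter (\<lambda>q. P (w ! q)) [0..<length w] = qs"
  proof (rule sorted_distinct_set_unique)
    show "sorted (filter (\<lambda>q. P (w ! q)) [0..<length w])" by (rule sorted_wrt_filter) simp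
    show "sorted qs" "distinct qs" using assms(1) by (simp_all add: strict_sorted_iff)
    show "set (filter (\<lambda>q. P (w ! q)) [0..<length w]) = set qs" using assms(2) by auto
  qed simp
  finally show ?thesis .
qed

lemma standard_filter_reading:
  assumes st: "standard n (la, w)" and k: "k \<le> n" and p: "set p = {1..k}"
    and sorted: "sorted_wrt (\<lambda>u v. reads_before (cell_of (la, w) u) (cell_of (la, w) v)) p"
  shows "filter (\<lambda>x. 1 \<le> x \<and> x \<le> k) w = p"
proof -
  note T = standardD[OF st] and C = standard_cell_of[OF st]
  let ?pos = "\<lambda>v. read_pos la (fst (cell_of (la, w) v)) (snd (cell_of (la, w) v))"
  have cell: "cell_of (la, w) v \<in> cells la" "w ! ?pos v = v" if "v \<in> set p" for v
    using C(1,2) that p k by auto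
  have "sorted_wrt (<) (map ?pos p)"
    unfolding sorted_wrt_map
  proof (rule sorted_wrt_mono_rel[OF _ sorted])
    fix u v assume "u \<in> set p" "v \<in> set p" "reads_before (cell_of (la, w) u) (cell_of (la, w) v)"
    then show "?pos u < ?pos v" using reads_before_iff_read_pos_less[OF cell(1) cell(1)] by simp
  qed
  moreover have "set (map ?pos p) = {q. q < length w \<and> 1 \<le> w ! q \<and> w ! q \<le> k}"
  proof (intro set_eqI iffI)
    fix q assume "q \<in> set (map ?pos p)"
    then obtain v where v: "v \<in> set p" "q = ?pos v" by auto
    then have "q < length w"
      using cell(1)[OF v(1)] read_pos_less_sum T(2) by (auto simp: cells_def case_prod_beta)
    then show "q \<in> {q. q < length w \<and> 1 \<le> w ! q \<and> w ! q \<le> k}" using cell(2) v p by auto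
  next
    fix q assume q: "q \<in> {q. q < length w \<and> 1 \<le> w ! q \<and> w ! q \<le> k}"
    then obtain i j where ij: "(i, j) \<in> cells la" "q = read_pos la i j"
      using read_pos_surj[of q la] T(2) by (auto simp: cells_def)
    then have "cell_of (la, w) (w ! q) = (i, j)" using C(3)[of "w ! q" "(i, j)"] q k by simp
    then have "q = ?pos (w ! q)" using ij(2) by simp
    moreover have "w ! q \<in> set p" using q p by simp
    ultimately show "q \<in> set (map ?pos p)" unfolding set_map by (rule image_eqI)
  qed
  ultimately have "filter (\<lambda>x. 1 \<le> x \<and> x \<le> k) w = map ((!) w) (map ?pos p)"
    by (rule filter_eq_map_nth)
  also have "\<dots> = p" using cell by (simp add: map_idI)
  finally show ?thesis .
qed

lemma grows_Nil: "grows [] c \<Longrightarrow> c = (0, 0)"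
  by (cases c) (auto simp: grows_def)

lemma grows_corner: "grows [(0, 0)] c \<Longrightarrow> c = (0, 1) \<or> c = (1, 0)"
  by (cases c) (auto simp: grows_def)

lemma order12_eq_filter: "order12 w = filter (\<lambda>x. 1 \<le> x \<and> x \<le> 2) w"
  unfolding order12_def by (rule filter_cong) auto

lemma standard_order12:
  assumes st: "standard n (la, w)" and n: "2 \<le> n"
  shows "cell_of (la, w) 1 = (0, 0) \<and>
    (cell_of (la, w) 2 = (0, 1) \<and> order12 w = [1, 2] \<or> cell_of (la, w) 2 = (1, 0) \<and> order12 w = [2, 1])"
proof -
  have c1: "cell_of (la, w) 1 = (0, 0)" using grows_cell_of[OF st, of 1] n by (simp add: grows_Nil)
  then have "grows [(0, 0)] (cell_of (la, w) 2)"
    using grows_cell_of[OF st, of 2] n by (simp add: numeral_2_eq_2)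
  then consider "cell_of (la, w) 2 = (0, 1)" | "cell_of (la, w) 2 = (1, 0)" using grows_corner by blast
  then show ?thesis
  proof cases
    case 1
    then have "filter (\<lambda>x. 1 \<le> x \<and> x \<le> 2) w = [1, 2]"
      using c1 by (intro standard_filter_reading[OF st n]) (auto simp: reads_before_def)
    then show ?thesis using c1 1 by (simp add: order12_eq_filter)
  next
    case 2
    then have "filter (\<lambda>x. 1 \<le> x \<and> x \<le> 2) w = [2, 1]"
      using c1 by (intro standard_filter_reading[OF st n]) (auto simp: reads_before_def)
    then show ?thesis using c1 2 by (simp add: order12_eq_filter)
  qed
qed

lemma order12_small:
  assumes st: "standard n (la, w)" and n: "n < 2"
  shows "order12 w = [1..<Suc n]"
proof -
  note T = standardD[OF st]
  consider "n = 0" | "n = 1" using n by linarith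
  then have "w = [1..<Suc n]"
  proof cases
    case 1
    then show ?thesis using T(4) by simp
  next
    case 2
    then obtain x where "w = [x]" using T(4) by (auto simp: length_Suc_conv)
    then show ?thesis using T(6) 2 by simp
  qed
  then show ?thesis using n by (auto simp: order12_def less_Suc_eq)
qed

lemma order12_transpose:
  assumes st: "standard n t"
  shows "order12 (snd (transpose_tab t)) = rev (order12 (snd t))"
proof (cases "2 \<le> n")
  case True
  have stt: "standard n (fst (transpose_tab t), snd (transpose_tab t))"
    using transpose_standard[OF st] by simp
  have "cell_of (transpose_tab t) 2 = prod.swap (cell_of t 2)"
    using cell_of_transpose[OF st, of 2] True by simp
  then show ?thesis
    using standard_order12[OF stt True] standard_order12[of n "fst t" "snd t"] st True by auto
next
  case False
  then show ?thesis
    using order12_small[of n "fst t" "snd t"] order12_small[of n "fst (transpose_tab t)"]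
      transpose_standard[OF st] st by (auto simp: less_Suc_eq)
qed

text \<open>The ten standard tableaux with four cells, each given by the cells of \<open>1, 2, 3, 4\<close> and by
  its reading word.\<close>

definition tableaux4 :: "((nat \<times> nat) list \<times> nat list) list" where
  "tableaux4 =
    [([(0, 0), (0, 1), (0, 2), (0, 3)], [1, 2, 3, 4]), ([(0, 0), (0, 1), (0, 2), (1, 0)], [4, 1, 2, 3]),
     ([(0, 0), (0, 1), (1, 0), (0, 2)], [3, 1, 2, 4]), ([(0, 0), (1, 0), (0, 1), (0, 2)], [2, 1, 3, 4]),
     ([(0, 0), (0, 1), (1, 0), (1, 1)], [3, 4, 1, 2]), ([(0, 0), (1, 0), (0, 1), (1, 1)], [2, 4, 1, 3]),
     ([(0, 0), (0, 1), (1, 0), (2, 0)], [4, 3, 1, 2]), ([(0, 0), (1, 0), (0, 1), (2, 0)], [4, 2, 1, 3]),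
     ([(0, 0), (1, 0), (2, 0), (0, 1)], [3, 2, 1, 4]), ([(0, 0), (1, 0), (2, 0), (3, 0)], [4, 3, 2, 1])]"

lemma tableaux4_reading:
  "(cs, p) \<in> set tableaux4 \<Longrightarrow>
    set p = {1..4} \<and> sorted_wrt (\<lambda>u v. reads_before (cs ! (u - 1)) (cs ! (v - 1))) p"
  by (auto simp: tableaux4_def reads_before_def)

lemma grows_tableaux4:
  assumes "grows [] c1" "grows [c1] c2" "grows [c1, c2] c3" "grows [c1, c2, c3] c4"
  shows "[c1, c2, c3, c4] \<in> fst ` set tableaux4"
proof -
  have c1: "c1 = (0, 0)" by (rule grows_Nil[OF assms(1)])
  then have "c2 = (0, 1) \<or> c2 = (1, 0)" using grows_corner assms(2) by simp
  then have "c2 = (0, 1) \<and> (c3 = (0, 2) \<or> c3 = (1, 0)) \<or> c2 = (1, 0) \<and> (c3 = (0, 1) \<or> c3 = (2, 0))"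
    using assms(3) c1 by (cases c3) (auto simp: grows_def)
  then consider "c2 = (0, 1)" "c3 = (0, 2)" | "c2 = (0, 1)" "c3 = (1, 0)"
    | "c2 = (1, 0)" "c3 = (0, 1)" | "c2 = (1, 0)" "c3 = (2, 0)"
    by blast
  then show ?thesis
  proof cases
    case 1
    then have "c4 = (0, 3) \<or> c4 = (1, 0)" using assms(4) c1 by (cases c4) (auto simp: grows_def)
    then show ?thesis using c1 1 by (auto simp: tableaux4_def)
  next
    case 2
    then have "c4 = (0, 2) \<or> c4 = (1, 1) \<or> c4 = (2, 0)"
      using assms(4) c1 by (cases c4) (auto simp: grows_def)
    then show ?thesis using c1 2 by (auto simp: tableaux4_def)
  next
    case 3
    then have "c4 = (0, 2) \<or> c4 = (1, 1) \<or> c4 = (2, 0)"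
      using assms(4) c1 by (cases c4) (auto simp: grows_def)
    then show ?thesis using c1 3 by (auto simp: tableaux4_def)
  next
    case 4
    then have "c4 = (0, 1) \<or> c4 = (3, 0)" using assms(4) c1 by (cases c4) (auto simp: grows_def)
    then show ?thesis using c1 4 by (auto simp: tableaux4_def)
  qed
qed

lemma standard_tableaux4:
  assumes st: "standard n (la, w)" and n: "4 \<le> n"
  shows "(map (cell_of (la, w)) [1..<5], filter (\<lambda>x. 1 \<le> x \<and> x \<le> 4) w) \<in> set tableaux4"
proof -
  let ?c = "cell_of (la, w)" and ?cs = "map (cell_of (la, w)) [1..<5]"
  have g: "grows (map ?c [1..<k]) (?c k)" if "1 \<le> k" "k \<le> 4" for k
    using grows_cell_of[OF st that(1)] that n by simp
  have "[1..<2] = [1 :: nat]" "[1..<3] = [1, 2 :: nat]" "[1..<4] = [1, 2, 3 :: nat]"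
    "[1..<5] = [1, 2, 3, 4 :: nat]" by (simp_all add: upt_rec)
  then have "grows [] (?c 1)" "grows [?c 1] (?c 2)" "grows [?c 1, ?c 2] (?c 3)"
    "grows [?c 1, ?c 2, ?c 3] (?c 4)" "?cs = [?c 1, ?c 2, ?c 3, ?c 4]"
    using g[of 1] g[of 2] g[of 3] g[of 4] by simp_all
  then have "?cs \<in> fst ` set tableaux4" using grows_tableaux4 by presburger
  then obtain p where p: "(?cs, p) \<in> set tableaux4" by force
  note r = tableaux4_reading[OF p]
  have "?cs ! (u - 1) = ?c u" if "u \<in> set p" for u using that r by auto
  then have "sorted_wrt (\<lambda>u v. reads_before (?c u) (?c v)) p"
    using sorted_wrt_mono_rel[OF _ r[THEN conjunct2]] by (metis (no_types, lifting))
  then have "filter (\<lambda>x. 1 \<le> x \<and> x \<le> 4) w = p"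
    using standard_filter_reading[OF st n] r by blast
  then show ?thesis using p by simp
qed

definition preimage_order12 :: "nat list \<Rightarrow> nat list" where
  "preimage_order12 p = order12 (sigma 2 (sigma 1 (map unshift p)))"

lemma order12_fold_sigma_ge_3:
  "\<forall>a\<in>set as. 3 \<le> a \<Longrightarrow> order12 (fold sigma as y) = order12 y"
proof (induction as arbitrary: y)
  case (Cons a as)
  have "order12 (sigma a y) = order12 y"
    unfolding order12_def by (rule filter_sigma_ignore) (use Cons.prems in auto)
  then show ?case using Cons by simp
qed simp

text \<open>Only \<open>\<sigma>\<^sub>1\<close> and \<open>\<sigma>\<^sub>2\<close> move the letters \<open>1\<close>, \<open>2\<close>, and they only see the letters \<open>1, 2, 3\<close> of
  the unshifted word, i.e. the letters \<open>1, 2, 3, 4\<close> of the original one.\<close>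

lemma order12_B0_preimage_word:
  assumes st: "standard (Suc (Suc m)) (la, w)" and m: "2 \<le> m"
  shows "order12 (B0_preimage_word m w) = preimage_order12 (filter (\<lambda>x. 1 \<le> x \<and> x \<le> 4) w)"
proof -
  have pos: "1 \<le> x" if "x \<in> set w" for x using standardD(6)[OF st] that by auto
  have upt: "[1..<Suc m] = 1 # 2 # [3..<Suc m]"
    using m upt_conv_Cons[of 1 "Suc m"] upt_conv_Cons[of 2 "Suc m"] by (simp add: numeral_eq_Suc)
  have low: "order12 (filter P y) = order12 (filter Q y)" if "P 1" "P 2" "Q 1" "Q 2" for P Q y
    unfolding order12_def filter_filter by (rule filter_cong) (use that in auto)
  have "order12 (B0_preimage_word m w) = order12 (fold sigma [1..<Suc m] (map unshift w))"
    using low[of "\<lambda>v. v \<noteq> Suc m" "\<lambda>_. True"] m by (simp add: B0_preimage_word_def)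
  also have "\<dots> = order12 (fold sigma [3..<Suc m] (sigma 2 (sigma 1 (map unshift w))))"
    by (simp only: upt fold_Cons comp_apply)
  also have "\<dots> = order12 (sigma 2 (sigma 1 (map unshift w)))"
    by (rule order12_fold_sigma_ge_3) auto
  also have "\<dots> = order12 (filter (\<lambda>v. v \<le> 3) (sigma 2 (sigma 1 (map unshift w))))"
    using low[of "\<lambda>_. True" "\<lambda>v. v \<le> 3"] by simp
  also have "filter (\<lambda>v. v \<le> 3) (sigma 2 (sigma 1 (map unshift w))) =
      sigma 2 (sigma 1 (filter (\<lambda>v. v \<le> 3) (map unshift w)))"
  proof -
    have "filter (\<lambda>v. v \<le> 3) (sigma a y) = sigma a (filter (\<lambda>v. v \<le> 3) y)" if "a \<le> 2" for a y
      by (rule filter_sigma_commute) (use that in auto)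
    then show ?thesis by simp
  qed
  also have "filter (\<lambda>v. v \<le> 3) (map unshift w) = map unshift (filter (\<lambda>x. 1 \<le> x \<and> x \<le> 4) w)"
    unfolding filter_map comp_def using pos by (auto simp: unshift_def intro!: arg_cong[of _ _ "map unshift"] filter_cong)
  finally show ?thesis by (simp add: preimage_order12_def)
qed

lemma transpose_tab_image_standard:
  "transpose_tab ` {t. standard m t \<and> P (order12 (snd t))} =
    {t. standard m t \<and> P (rev (order12 (snd t)))}"
proof (intro set_eqI iffI)
  fix u assume "u \<in> transpose_tab ` {t. standard m t \<and> P (order12 (snd t))}"
  then obtain t where t: "standard m t" "P (order12 (snd t))" "u = transpose_tab t" by blast
  then show "u \<in> {t. standard m t \<and> P (rev (order12 (snd t)))}"
    using transpose_standard[OF t(1)] order12_transpose[OF t(1)] by simp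
next
  fix u assume "u \<in> {t. standard m t \<and> P (rev (order12 (snd t)))}"
  then have u: "standard m u" "P (rev (order12 (snd u)))" by simp_all
  then have "transpose_tab u \<in> {t. standard m t \<and> P (order12 (snd t))}"
    using transpose_standard[OF u(1)] order12_transpose[OF u(1)] by simp
  moreover have "u = transpose_tab (transpose_tab u)" using transpose_transpose[OF u(1)] by simp
  ultimately show "u \<in> transpose_tab ` {t. standard m t \<and> P (order12 (snd t))}"
    by (rule rev_image_eqI)
qed

lemma UN_support_B1_standard:
  "(\<Union>t\<in>{t. standard m t \<and> P (order12 (snd t))}. support (B1 t)) =
    {T'. standard (Suc (Suc m)) T' \<and> order12 (snd (transpose_tab T')) = [1, 2] \<and>
      P (rev (order12 (B0_preimage_word m (snd (transpose_tab T')))))}"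
  (is "?L = ?R")
proof -
  let ?T = "{t. standard m t \<and> P (order12 (snd t))}"
  let ?Q = "\<lambda>T''. standard (Suc (Suc m)) T'' \<and> order12 (snd T'') = [1, 2] \<and>
      P (rev (order12 (B0_preimage_word m (snd T''))))"
  have "?L = transpose_tab ` (\<Union>t\<in>transpose_tab ` ?T. support (B0 t))"
    by (simp add: support_B1 image_UN)
  also have "\<dots> = transpose_tab ` {T''. ?Q T''}"
    unfolding transpose_tab_image_standard UN_support_B0_standard[where P = "\<lambda>w. P (rev (order12 w))"] ..
  also have "\<dots> = ?R"
  proof (intro set_eqI iffI)
    fix T' assume "T' \<in> transpose_tab ` {T''. ?Q T''}"
    then obtain T'' where T'': "?Q T''" "T' = transpose_tab T''" by blast
    then have "transpose_tab T' = T''" using transpose_transpose by blast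
    then show "T' \<in> ?R" using T'' transpose_standard by auto
  next
    fix T' assume T': "T' \<in> ?R"
    then have "?Q (transpose_tab T')" using transpose_standard by simp
    moreover have "T' = transpose_tab (transpose_tab T')" using T' transpose_transpose[of "Suc (Suc m)" T'] by simp
    ultimately show "T' \<in> transpose_tab ` {T''. ?Q T''}" by (intro rev_image_eqI) simp_all
  qed
  finally show ?thesis .
qed

lemma order12_filter_4: "order12 (filter (\<lambda>x. 1 \<le> x \<and> x \<le> 4) w) = order12 w"
  unfolding order12_def filter_filter by (rule filter_cong) auto

lemma support_lin_B0_order12:
  assumes X: "nonneg_comb X" "support X = {t. standard (Suc (Suc m)) t \<and> order12 (snd t) = r}"
    and st: "standard (Suc (Suc (Suc (Suc m)))) (la, w)"
  shows "(la, w) \<in> support (lin B0 X) \<longleftrightarrow>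
    order12 w = [1, 2] \<and> preimage_order12 (filter (\<lambda>x. 1 \<le> x \<and> x \<le> 4) w) = r"
  using support_lin[where F = B0, OF X(1) nonneg_comb_B0] X(2)
    UN_support_B0_standard[where P = "\<lambda>w. order12 w = r"] order12_B0_preimage_word[OF st] st
  by simp

lemma support_lin_B1_order12:
  assumes X: "nonneg_comb X" "support X = {t. standard (Suc (Suc m)) t \<and> order12 (snd t) = r}"
    and st: "standard (Suc (Suc (Suc (Suc m)))) T'"
  shows "T' \<in> support (lin B1 X) \<longleftrightarrow> order12 (snd (transpose_tab T')) = [1, 2] \<and>
    rev (preimage_order12 (filter (\<lambda>x. 1 \<le> x \<and> x \<le> 4) (snd (transpose_tab T')))) = r"
proof -
  have stt: "standard (Suc (Suc (Suc (Suc m)))) (fst (transpose_tab T'), snd (transpose_tab T'))"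
    using transpose_standard[OF st] by simp
  show ?thesis
    using support_lin[where F = B1, OF X(1) nonneg_comb_B1] X(2)
      UN_support_B1_standard[where P = "\<lambda>o'. o' = r"] order12_B0_preimage_word[OF stt] st
    by simp
qed

lemma tableaux4_order12:
  "\<forall>(cs, p)\<in>set tableaux4. case map_of tableaux4 (map prod.swap cs) of None \<Rightarrow> False | Some q \<Rightarrow>
    (order12 p = [1, 2] \<and> preimage_order12 p = [1, 2] \<longleftrightarrow> p \<in> {[1, 2, 3, 4], [4, 1, 2, 3], [3, 4, 1, 2]}) \<and>
    (order12 p = [1, 2] \<and> preimage_order12 p = [2, 1] \<longleftrightarrow> p \<in> {[4, 3, 1, 2], [3, 1, 2, 4]}) \<and>
    (order12 q = [1, 2] \<and> rev (preimage_order12 q) = [1, 2] \<longleftrightarrow> p \<in> {[4, 2, 1, 3], [2, 1, 3, 4]}) \<and>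
    (order12 q = [1, 2] \<and> rev (preimage_order12 q) = [2, 1] \<longleftrightarrow>
      p \<in> {[4, 3, 2, 1], [3, 2, 1, 4], [2, 4, 1, 3]})"
  by (simp add: tableaux4_def order12_def, simp add: preimage_order12_def order12_def sigma_def sw3_def unshift_def)

lemma tableaux4_transpose_order12:
  assumes "(cs, p) \<in> set tableaux4" "(map prod.swap cs, q) \<in> set tableaux4"
  shows "(order12 p = [1, 2] \<and> preimage_order12 p = [1, 2] \<longleftrightarrow> p \<in> {[1, 2, 3, 4], [4, 1, 2, 3], [3, 4, 1, 2]}) \<and>
    (order12 p = [1, 2] \<and> preimage_order12 p = [2, 1] \<longleftrightarrow> p \<in> {[4, 3, 1, 2], [3, 1, 2, 4]}) \<and>
    (order12 q = [1, 2] \<and> rev (preimage_order12 q) = [1, 2] \<longleftrightarrow> p \<in> {[4, 2, 1, 3], [2, 1, 3, 4]}) \<and>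
    (order12 q = [1, 2] \<and> rev (preimage_order12 q) = [2, 1] \<longleftrightarrow>
      p \<in> {[4, 3, 2, 1], [3, 2, 1, 4], [2, 4, 1, 3]})"
proof -
  have "distinct (map fst tableaux4)" by (simp add: tableaux4_def)
  then have "map_of tableaux4 (map prod.swap cs) = Some q" using assms(2) by simp
  then show ?thesis using bspec[OF tableaux4_order12 assms(1)] by simp
qed

lemma support_lin_Sigma_std:
  "nonneg_comb (lin B0 (Sigma_std m)) \<and>
    support (lin B0 (Sigma_std m)) = {t. standard (Suc (Suc m)) t \<and> order12 (snd t) = [1, 2]}"
  "nonneg_comb (lin B1 (Sigma_std m)) \<and>
    support (lin B1 (Sigma_std m)) = {t. standard (Suc (Suc m)) t \<and> order12 (snd t) = [2, 1]}"
proof -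
  show "nonneg_comb (lin B0 (Sigma_std m)) \<and>
    support (lin B0 (Sigma_std m)) = {t. standard (Suc (Suc m)) t \<and> order12 (snd t) = [1, 2]}"
    using nonneg_comb_lin[OF nonneg_comb_Sigma_std nonneg_comb_B0]
      support_lin[OF nonneg_comb_Sigma_std nonneg_comb_B0] support_Sigma_std
      UN_support_B0_standard[where P = "\<lambda>_. True"]
    by simp
  have "order12 (snd (transpose_tab t)) = [1, 2] \<longleftrightarrow> order12 (snd t) = [2, 1]" if "standard k t" for k t
    using order12_transpose[OF that] by auto
  then have "{T'. standard (Suc (Suc m)) T' \<and> order12 (snd (transpose_tab T')) = [1, 2]} =
      {t. standard (Suc (Suc m)) t \<and> order12 (snd t) = [2, 1]}"
    by blast
  then show "nonneg_comb (lin B1 (Sigma_std m)) \<and>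
    support (lin B1 (Sigma_std m)) = {t. standard (Suc (Suc m)) t \<and> order12 (snd t) = [2, 1]}"
    using nonneg_comb_lin[OF nonneg_comb_Sigma_std nonneg_comb_B1]
      support_lin[OF nonneg_comb_Sigma_std nonneg_comb_B1] support_Sigma_std
      UN_support_B1_standard[where P = "\<lambda>_. True"]
    by simp
qed

theorem lemma19:
  fixes T' :: tab and n :: nat
  assumes "4 \<le> n" and "standard n T'"
  shows "(lin B0 (lin B0 (Sigma_std (n - 4))) T' \<noteq> 0 \<longleftrightarrow>
            filter (\<lambda>x. 1 \<le> x \<and> x \<le> 4) (snd T') \<in> {[1,2,3,4], [4,1,2,3], [3,4,1,2]}) \<and>
         (lin B0 (lin B1 (Sigma_std (n - 4))) T' \<noteq> 0 \<longleftrightarrow>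
            filter (\<lambda>x. 1 \<le> x \<and> x \<le> 4) (snd T') \<in> {[4,3,1,2], [3,1,2,4]}) \<and>
         (lin B1 (lin B0 (Sigma_std (n - 4))) T' \<noteq> 0 \<longleftrightarrow>
            filter (\<lambda>x. 1 \<le> x \<and> x \<le> 4) (snd T') \<in> {[4,2,1,3], [2,1,3,4]}) \<and>
         (lin B1 (lin B1 (Sigma_std (n - 4))) T' \<noteq> 0 \<longleftrightarrow>
            filter (\<lambda>x. 1 \<le> x \<and> x \<le> 4) (snd T') \<in> {[4,3,2,1], [3,2,1,4], [2,4,1,3]})"
proof -
  define m where "m = n - 4"
  obtain la w where T': "T' = (la, w)" by (cases T')
  have "n = Suc (Suc (Suc (Suc m)))" using assms(1) by (simp add: m_def)
  then have st: "standard (Suc (Suc (Suc (Suc m)))) (la, w)" using assms(2) T' by simp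
  obtain la' w' where Tt: "transpose_tab (la, w) = (la', w')" by (cases "transpose_tab (la, w)")
  let ?cs = "map (cell_of (la, w)) [1..<5]"
  have tt: "map (cell_of (la', w')) [1..<5] = map prod.swap ?cs"
    using cell_of_transpose[OF st] Tt by simp
  have stt: "standard (Suc (Suc (Suc (Suc m)))) (la', w')" using transpose_standard[OF st] Tt by simp
  have p: "(?cs, filter (\<lambda>x. 1 \<le> x \<and> x \<le> 4) w) \<in> set tableaux4"
    by (rule standard_tableaux4[OF st]) simp
  have q: "(map prod.swap ?cs, filter (\<lambda>x. 1 \<le> x \<and> x \<le> 4) w') \<in> set tableaux4"
    unfolding tt[symmetric] by (rule standard_tableaux4[OF stt]) simp
  note answers = tableaux4_transpose_order12[OF p q]
  note inner = support_lin_Sigma_std[of m]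
  show ?thesis
    using support_lin_B0_order12[OF inner(1)[THEN conjunct1] inner(1)[THEN conjunct2] st]
      support_lin_B0_order12[OF inner(2)[THEN conjunct1] inner(2)[THEN conjunct2] st]
      support_lin_B1_order12[OF inner(1)[THEN conjunct1] inner(1)[THEN conjunct2] st]
      support_lin_B1_order12[OF inner(2)[THEN conjunct1] inner(2)[THEN conjunct2] st]
      answers Tt T' order12_filter_4[of w] order12_filter_4[of w']
    by (simp add: support_def m_def)
qed

end
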